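(* Let $0<\varepsilon\le1$, $\alpha\in(0,1)$, $\xi(x)=e^{-\alpha x^2/(2\sqrt\varepsilon)}$ and $f_{2m+1}=x^{2m+1}\xi$ for $m\in\{0,1,2,\dots\}$. Then $f_{2m+1}\in D(S^*_\varepsilon)$, $$S^*_\varepsilon f_{2m+1}=-\frac{i}{2\sqrt\varepsilon}\,\Lambda_m(x,\alpha)\,x\,\xi(x),$$ and, for all $n,m\ge0$, $$(f_{2n+1},S^*_\varepsilon f_{2m+1})=-\frac{i}{2\sqrt\varepsilon}\int_{\mathbb R}\xi(x)\,x^{2n+2}\Lambda_m(x,\alpha)\,\xi(x)\,dx.$$
   Context: Work in $L^2(\mathbb{R})$ with $(f,g)=\int\overline fg\,dx$. Let $q$ be multiplication by $x$, $p=-i\,d/dx$, $t=q^{-1}p$ with $D(t)=\{f\in D(p):pf\in D(q^{-1})\}$, $t^*$ its adjoint, $L^2_1$ the odd subspace. Define $S^*_\varepsilon$ (notation only, not an adjoint) in $L^2_1$ by $D(S^*_\varepsilon)=\{f\in L^2_1\cap\bigcap_nD((t^* )^{2n+1}):\sum_{n=0}^N\frac{(-1)^n}{2n+1}(\sqrt\varepsilon t^* )^{2n+1}f$ converges in norm$\}$, $S^*_\varepsilon f=-\varepsilon^{-1/2}\sum_{n\ge0}\frac{(-1)^n}{2n+1}(\sqrt\varepsilon t^* )^{2n+1}f$. For $k\ge0$, $\Lambda_k(x,\alpha)=\big(x^2-2\sqrt\varepsilon\frac{\partial}{\partial\alpha}\big)^k\log\frac{1+\alpha}{1-\alpha}$,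 the operator acting in $\alpha$ with $x$ as a parameter. *)

theory Defs
  imports "HOL-Analysis.Analysis"
begin

text \<open>Elements of L^2(R) are represented by Borel measurable complex-valued functions
  with square-integrable modulus; operators are represented by their graphs (relations),
  closed under almost-everywhere equality of representatives.\<close>

definition L2 :: "(real \<Rightarrow> complex) set" where
  "L2 = {f. f \<in> borel_measurable lborel \<and> integrable lborel (\<lambda>x. (cmod (f x))\<^sup>2)}"

definition inner_L2 :: "(real \<Rightarrow> complex) \<Rightarrow> (real \<Rightarrow> complex) \<Rightarrow> complex" where
  "inner_L2 f g = (LINT x|lborel. cnj (f x) * g x)"

definition norm_L2 :: "(real \<Rightarrow> complex) \<Rightarrow> real" where
  "norm_L2 f = sqrt (LINT x|lborel. (cmod (f x))\<^sup>2)"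

definition L2_odd :: "(real \<Rightarrow> complex) set" where
  "L2_odd = {f \<in> L2. AE x in lborel. f (- x) = - f x}"

definition test_fun :: "(real \<Rightarrow> real) \<Rightarrow> bool" where
  "test_fun \<phi> \<longleftrightarrow> (\<forall>k x. ((deriv ^^ k) \<phi>) field_differentiable (at x)) \<and> bounded {x. \<phi> x \<noteq> 0}"

text \<open>Graph of p = -i d/dx on its maximal domain (weak derivative in L^2):
  p_rel f g means f \<in> D(p) and p f = g.\<close>
definition p_rel :: "(real \<Rightarrow> complex) \<Rightarrow> (real \<Rightarrow> complex) \<Rightarrow> bool" where
  "p_rel f g \<longleftrightarrow> f \<in> L2 \<and> g \<in> L2 \<and>
     (\<forall>\<phi>. test_fun \<phi> \<longrightarrow>
        (LINT x|lborel. f x * of_real (deriv \<phi> x)) = - (LINT x|lborel. \<i> * g x * of_real (\<phi> x)))"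

text \<open>Graph of t = q^{-1} p, D(t) = {f \<in> D(p). p f \<in> D(q^{-1})}.\<close>
definition t_rel :: "(real \<Rightarrow> complex) \<Rightarrow> (real \<Rightarrow> complex) \<Rightarrow> bool" where
  "t_rel f h \<longleftrightarrow> (\<exists>g. p_rel f g \<and> (\<lambda>x. g x / of_real x) \<in> L2 \<and>
      h \<in> L2 \<and> (AE x in lborel. h x = g x / of_real x))"

definition tstar_rel :: "(real \<Rightarrow> complex) \<Rightarrow> (real \<Rightarrow> complex) \<Rightarrow> bool" where
  "tstar_rel g h \<longleftrightarrow> g \<in> L2 \<and> h \<in> L2 \<and>
      (\<forall>f k. t_rel f k \<longrightarrow> inner_L2 g k = inner_L2 h f)"

primrec tstar_pow :: "nat \<Rightarrow> (real \<Rightarrow> complex) \<Rightarrow> (real \<Rightarrow> complex) \<Rightarrow> bool" where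
  "tstar_pow 0 f g \<longleftrightarrow> f \<in> L2 \<and> g \<in> L2 \<and> (AE x in lborel. g x = f x)"
| "tstar_pow (Suc n) f g \<longleftrightarrow> (\<exists>h. tstar_pow n f h \<and> tstar_rel h g)"

text \<open>Graph of S^*_eps: f \<in> L^2_1 \<inter> \<Inter>_n D((t^*)^{2n+1}), the partial sums
  \<Sum>_{n\<le>N} (-1)^n/(2n+1) (\<surd>eps t^*)^{2n+1} f converge in norm to s, and
  S^*_eps f = -eps^{-1/2} s.\<close>
definition S_rel :: "real \<Rightarrow> (real \<Rightarrow> complex) \<Rightarrow> (real \<Rightarrow> complex) \<Rightarrow> bool" where
  "S_rel \<epsilon> f h \<longleftrightarrow> f \<in> L2_odd \<and> h \<in> L2 \<and>
     (\<exists>G. (\<forall>n. tstar_pow (2*n+1) f (G n)) \<and>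
       (\<exists>s\<in>L2.
          (\<lambda>N. norm_L2 (\<lambda>x. (\<Sum>n\<le>N. of_real ((-1)^n / real (2*n+1) * sqrt \<epsilon> ^ (2*n+1)) * G n x) - s x))
            \<longlonglongrightarrow> 0
          \<and> (AE x in lborel. h x = - of_real (1 / sqrt \<epsilon>) * s x)))"

primrec Lambda :: "real \<Rightarrow> nat \<Rightarrow> real \<Rightarrow> real \<Rightarrow> real" where
  "Lambda \<epsilon> 0 = (\<lambda>x a. ln ((1 + a) / (1 - a)))"
| "Lambda \<epsilon> (Suc k) = (\<lambda>x a. x\<^sup>2 * Lambda \<epsilon> k x a - 2 * sqrt \<epsilon> * deriv (\<lambda>b. Lambda \<epsilon> k x b) a)"

end

theory Submission
  imports Defs "HOL-Probability.Probability" "HOL-Real_Asymp.Real_Asymp"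
begin

text \<open>
  On the odd Gaussian moments \<open>g j = x^(2j+1) \<xi>\<close>, integration by parts against \<open>g j / x\<close> shows
  that \<open>t\<^sup>*\<close> acts as \<open>(i \<alpha> + N) / \<surd>\<epsilon>\<close>, where \<open>N (g j) = -2 i \<surd>\<epsilon> j g (j - 1)\<close> is
  nilpotent. Expanding \<open>(t\<^sup>*)^k (g m)\<close> binomially, the series defining \<open>S\<^sup>*\<^sub>\<epsilon> (g m)\<close> becomes a
  combination of the finitely many \<open>N^l (g m)\<close>, \<open>l \<le> m\<close>, whose coefficients are the Taylor
  series of \<open>arctan\<close> and of its derivatives at \<open>i \<alpha>\<close>, namely \<open>i (-i)^l artanh^(l)(\<alpha>) / l!\<close>; they
  converge because \<open>\<alpha> < 1\<close>. Recombining them is the binomial expansion of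
  \<open>(x^2 - 2\<surd>\<epsilon> \<partial>\<^sub>\<alpha>)^m\<close>, which produces \<open>\<Lambda>\<^sub>m\<close>.

  Every other value of \<open>S\<^sup>*\<^sub>\<epsilon> (g m)\<close> agrees with this one almost everywhere, since \<open>t\<^sup>*\<close> is
  single valued: \<open>D(t)\<close> contains all smooth functions supported in a compact set away from 0,
  and no nonzero square-integrable function is orthogonal to all of them. The inner product
  formula therefore holds for every \<open>h\<close>.
\<close>

section \<open>Smooth functions\<close>

coinductive smooth :: "(real \<Rightarrow> real) \<Rightarrow> bool" where
  smoothI: "(\<And>x. (u has_real_derivative u' x) (at x)) \<Longrightarrow> smooth u' \<Longrightarrow> smooth u"

text \<open>The closure properties of \<open>smooth\<close> are proved by coinduction up to this
  inductively generated class of expressions.\<close>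

inductive smooth_expr :: "(real \<Rightarrow> real) \<Rightarrow> bool" where
  smooth_expr_base: "smooth u \<Longrightarrow> smooth_expr u"
| smooth_expr_add: "smooth_expr u \<Longrightarrow> smooth_expr v \<Longrightarrow> smooth_expr (\<lambda>x. u x + v x)"
| smooth_expr_mult: "smooth_expr u \<Longrightarrow> smooth_expr v \<Longrightarrow> smooth_expr (\<lambda>x. u x * v x)"
| smooth_expr_comp: "smooth g \<Longrightarrow> smooth q \<Longrightarrow> smooth_expr (\<lambda>x. g (q x))"

lemma smooth_has_derivative:
  assumes "smooth u"
  obtains u' where "\<And>x. (u has_real_derivative u' x) (at x)" "smooth u'"
  using assms by (cases rule: smooth.cases) blast

lemma smooth_expr_has_derivative:
  "smooth_expr u \<Longrightarrow> \<exists>u'. (\<forall>x. (u has_real_derivative u' x) (at x)) \<and> smooth_expr u'"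
proof (induction rule: smooth_expr.induct)
  case (smooth_expr_base u)
  then show ?case by (blast elim: smooth_has_derivative intro: smooth_expr.smooth_expr_base)
next
  case (smooth_expr_add u v)
  then obtain u' v' where "\<forall>x. (u has_real_derivative u' x) (at x)" "smooth_expr u'"
     "\<forall>x. (v has_real_derivative v' x) (at x)" "smooth_expr v'" by blast
  then show ?case
    by (intro exI[of _ "\<lambda>x. u' x + v' x"]) (auto intro!: derivative_intros smooth_expr.smooth_expr_add)
next
  case (smooth_expr_mult u v)
  then obtain u' v' where "\<forall>x. (u has_real_derivative u' x) (at x)" "smooth_expr u'"
     "\<forall>x. (v has_real_derivative v' x) (at x)" "smooth_expr v'" by blast
  with smooth_expr_mult.hyps show ?case
    by (intro exI[of _ "\<lambda>x. u' x * v x + v' x * u x"])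
       (auto intro!: DERIV_mult smooth_expr.smooth_expr_add smooth_expr.smooth_expr_mult)
next
  case (smooth_expr_comp g q)
  obtain g' where g': "\<And>x. (g has_real_derivative g' x) (at x)" "smooth g'"
    using smooth_expr_comp(1) by (blast elim: smooth_has_derivative)
  obtain q' where q': "\<And>x. (q has_real_derivative q' x) (at x)" "smooth q'"
    using smooth_expr_comp(2) by (blast elim: smooth_has_derivative)
  have "smooth_expr (\<lambda>x. g' (q x) * q' x)"
    by (intro smooth_expr.smooth_expr_mult smooth_expr.smooth_expr_comp smooth_expr.smooth_expr_base
        g'(2) q'(2) smooth_expr_comp(2))
  then show ?case
    by (intro exI[of _ "\<lambda>x. g' (q x) * q' x"]) (auto intro!: DERIV_chain2[OF g'(1) q'(1)])
qed

lemma smooth_expr_imp_smooth: "smooth_expr u \<Longrightarrow> smooth u"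
proof (coinduction arbitrary: u rule: smooth.coinduct)
  case (smooth u)
  then show ?case using smooth_expr_has_derivative by blast
qed

lemma smooth_add: "smooth u \<Longrightarrow> smooth v \<Longrightarrow> smooth (\<lambda>x. u x + v x)"
  by (rule smooth_expr_imp_smooth, rule smooth_expr_add; rule smooth_expr_base)

lemma smooth_mult: "smooth u \<Longrightarrow> smooth v \<Longrightarrow> smooth (\<lambda>x. u x * v x)"
  by (rule smooth_expr_imp_smooth, rule smooth_expr_mult; rule smooth_expr_base)

lemma smooth_comp: "smooth g \<Longrightarrow> smooth q \<Longrightarrow> smooth (\<lambda>x. g (q x))"
  by (rule smooth_expr_imp_smooth, rule smooth_expr_comp)

lemma smooth_const: "smooth (\<lambda>x. c)"
proof -
  have zero: "smooth (\<lambda>x::real. 0::real)"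
    by (coinduction rule: smooth.coinduct) (auto intro!: exI[of _ "\<lambda>x. 0"])
  show ?thesis by (rule smoothI[of _ "\<lambda>x. 0"]) (auto intro: zero)
qed

lemma smooth_ident: "smooth (\<lambda>x. x)"
  by (rule smoothI[of _ "\<lambda>x. 1"]) (auto intro: smooth_const)

lemma smooth_exp: "smooth exp"
  by (coinduction rule: smooth.coinduct) (intro exI[of _ exp] conjI allI disjI1 DERIV_exp refl)

lemma smooth_cmult: "smooth u \<Longrightarrow> smooth (\<lambda>x. c * u x)"
  using smooth_mult[OF smooth_const] by simp

lemma smooth_diff: "smooth u \<Longrightarrow> smooth v \<Longrightarrow> smooth (\<lambda>x. u x - v x)"
  using smooth_add[OF _ smooth_cmult[of v "-1"]] by simp

lemma smooth_power: "smooth u \<Longrightarrow> smooth (\<lambda>x. u x ^ n)"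
  by (induction n) (auto intro: smooth_const smooth_mult)

lemma smooth_deriv: "smooth u \<Longrightarrow> smooth (deriv u)"
proof -
  assume "smooth u"
  then obtain u' where "\<forall>x. (u has_real_derivative u' x) (at x)" "smooth u'"
    by (blast elim: smooth_has_derivative)
  moreover then have "deriv u = u'" using DERIV_imp_deriv by blast
  ultimately show ?thesis by simp
qed

lemma smooth_higher_deriv: "smooth u \<Longrightarrow> smooth ((deriv ^^ k) u)"
  by (induction k) (auto intro: smooth_deriv)

lemma smooth_derivative:
  "smooth u \<Longrightarrow> (\<And>x. (u has_real_derivative u' x) (at x)) \<Longrightarrow> smooth u'"
proof -
  assume "smooth u" and u': "\<And>x. (u has_real_derivative u' x) (at x)"
  have "deriv u = u'" using u' DERIV_imp_deriv by blast
  with smooth_deriv[OF \<open>smooth u\<close>] show ?thesis by simp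
qed

lemma smooth_field_differentiable: "smooth u \<Longrightarrow> u field_differentiable (at x)"
  unfolding field_differentiable_def by (blast elim: smooth_has_derivative)

lemma smooth_isCont: "smooth u \<Longrightarrow> isCont u x"
  by (rule field_differentiable_imp_continuous_at[OF smooth_field_differentiable])

lemma test_funI: "smooth u \<Longrightarrow> bounded {x. u x \<noteq> 0} \<Longrightarrow> test_fun u"
  unfolding test_fun_def by (simp add: smooth_field_differentiable smooth_higher_deriv)

section \<open>Flat functions and bumps\<close>

text \<open>These functions are closed under differentiation, which makes \<open>exp (-1/x)\<close> (extended
  by 0) smooth by coinduction.\<close>

definition flat_poly :: "real poly \<Rightarrow> real \<Rightarrow> real" where
  "flat_poly p x = (if x > 0 then poly p (1/x) * exp (- 1/x) else 0)"

lemma poly_times_exp_neg_tendsto_0: "((\<lambda>t. poly (r::real poly) t * exp (- t)) \<longlongrightarrow> 0) at_top"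
proof -
  have "((\<lambda>t. \<Sum>i\<le>degree r. coeff r i * (t ^ i / exp t)) \<longlongrightarrow> 0) at_top"
    by (intro tendsto_null_sum tendsto_mult_right_zero tendsto_power_div_exp_0)
  moreover have "(\<Sum>i\<le>degree r. coeff r i * (t ^ i / exp t)) = poly r t * exp (- t)" for t
    by (simp add: poly_altdef exp_minus divide_inverse sum_distrib_left mult_ac)
  ultimately show ?thesis by simp
qed

lemma poly_inverse_times_exp_tendsto_0:
  "((\<lambda>y. poly (r::real poly) (1/y) * exp (- 1/y)) \<longlongrightarrow> 0) (at_right 0)"
proof -
  have "((\<lambda>y. poly r (inverse y) * exp (- inverse y)) \<longlongrightarrow> 0) (at_right 0)"
    using filterlim_compose[OF poly_times_exp_neg_tendsto_0 filterlim_inverse_at_top_right] by simp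
  then show ?thesis by (simp add: field_simps)
qed

lemma flat_poly_has_derivative:
  "(flat_poly p has_real_derivative flat_poly ([:0,0,1:] * (p - pderiv p)) x) (at x)"
proof -
  consider "x > 0" | "x < 0" | "x = 0" by linarith
  then show ?thesis
  proof cases
    case 1
    have "((\<lambda>y. poly p (1/y) * exp (- 1/y)) has_real_derivative
        poly (pderiv p) (1/x) * (- 1 / x^2) * exp (- 1/x) + poly p (1/x) * (exp (- 1/x) * (1/x^2))) (at x)"
      using 1
      by (auto intro!: derivative_eq_intros DERIV_chain2[OF poly_DERIV] simp: power2_eq_square field_simps)
    then have "((\<lambda>y. poly p (1/y) * exp (- 1/y))
        has_real_derivative flat_poly ([:0,0,1:] * (p - pderiv p)) x) (at x)"
      using 1 by (simp add: flat_poly_def poly_diff power2_eq_square field_simps)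
    then show ?thesis
      by (rule has_field_derivative_transform_within_open[where S="{0<..}"])
         (use 1 in \<open>auto simp: flat_poly_def\<close>)
  next
    case 2
    have "((\<lambda>y. 0) has_real_derivative flat_poly ([:0,0,1:] * (p - pderiv p)) x) (at x)"
      using 2 by (simp add: flat_poly_def)
    then show ?thesis
      by (rule has_field_derivative_transform_within_open[where S="{..<0}"])
         (use 2 in \<open>auto simp: flat_poly_def\<close>)
  next
    case 3
    have right: "((\<lambda>y. (flat_poly p y - flat_poly p 0) / (y - 0)) \<longlongrightarrow> 0) (at_right 0)"
      using poly_inverse_times_exp_tendsto_0[of "pCons 0 p"]
      by (rule Lim_transform_eventually)
         (auto simp: eventually_at_right_field flat_poly_def intro!: exI[of _ 1])
    have left: "((\<lambda>y. (flat_poly p y - flat_poly p 0) / (y - 0)) \<longlongrightarrow> 0) (at_left 0)"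
      by (rule Lim_transform_eventually[of "\<lambda>y. 0"])
         (auto simp: eventually_at_left_field flat_poly_def intro!: exI[of _ "-1"])
    show ?thesis
      using filterlim_split_at[OF left right] 3 by (simp add: has_field_derivative_iff flat_poly_def)
  qed
qed

lemma smooth_flat_poly: "smooth (flat_poly p)"
proof -
  have "\<exists>p. u = flat_poly p \<Longrightarrow> smooth u" for u
  proof (coinduction arbitrary: u rule: smooth.coinduct)
    case (smooth u)
    then show ?case using flat_poly_has_derivative by blast
  qed
  then show ?thesis by blast
qed

definition flat_step :: "real \<Rightarrow> real" where
  "flat_step x = (if x > 0 then exp (- 1/x) else 0)"

lemma smooth_flat_step: "smooth flat_step"
proof -
  have "flat_step = flat_poly 1" by (auto simp: flat_step_def flat_poly_def)
  then show ?thesis using smooth_flat_poly by metis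
qed

lemma flat_step_nonneg: "0 \<le> flat_step x"
  by (simp add: flat_step_def)

lemma flat_step_le_1: "flat_step x \<le> 1"
  by (simp add: flat_step_def)

lemma flat_step_eq_0: "x \<le> 0 \<Longrightarrow> flat_step x = 0"
  by (simp add: flat_step_def)

lemma flat_step_tendsto_1: "(flat_step \<longlongrightarrow> 1) at_top"
proof -
  have "((\<lambda>t::real. exp (- inverse t)) \<longlongrightarrow> exp (- 0)) at_top"
    by (intro tendsto_exp tendsto_minus tendsto_inverse_0_at_top filterlim_ident)
  then have "((\<lambda>t::real. exp (- inverse t)) \<longlongrightarrow> 1) at_top" by simp
  then show ?thesis
    by (rule Lim_transform_eventually)
       (auto simp: flat_step_def eventually_at_top_linorder divide_inverse intro!: exI[of _ 1])
qed

definition bump :: "real \<Rightarrow> real" where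
  "bump y = exp 1 * flat_step (1 - y\<^sup>2)"

lemma smooth_bump: "smooth bump"
  unfolding bump_def
  by (intro smooth_cmult smooth_comp[OF smooth_flat_step] smooth_diff smooth_const smooth_power smooth_ident)

lemma bump_0: "bump 0 = 1"
  by (simp add: bump_def flat_step_def exp_minus)

lemma bump_nonneg: "0 \<le> bump y"
  by (simp add: bump_def flat_step_nonneg)

lemma bump_le_1: "bump y \<le> 1"
proof (cases "y\<^sup>2 < 1")
  case True
  then have "1 \<le> 1 / (1 - y\<^sup>2)"
    by (simp add: le_divide_eq)
  then have "exp 1 * exp (- 1 / (1 - y\<^sup>2)) \<le> 1"
    by (simp add: exp_add[symmetric] exp_le_one_iff)
  then show ?thesis using True by (simp add: bump_def flat_step_def)
qed (simp add: bump_def flat_step_def)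

lemma bump_eq_0: "1 < \<bar>y\<bar> \<Longrightarrow> bump y = 0"
proof -
  assume "1 < \<bar>y\<bar>"
  then have "1 < y\<^sup>2"
    using one_less_power[of "\<bar>y\<bar>" 2] by simp
  then show "bump y = 0" by (simp add: bump_def flat_step_eq_0)
qed

section \<open>Square-integrable functions\<close>

lemma borel_measurable_cnj [measurable (raw)]:
  "f \<in> borel_measurable M \<Longrightarrow> (\<lambda>x. cnj (f x :: complex)) \<in> borel_measurable M"
  using measurable_compose[of f M borel cnj borel]
    borel_measurable_continuous_onI[OF continuous_on_cnj[OF continuous_on_id]]
  by auto

lemma L2I: "f \<in> borel_measurable lborel \<Longrightarrow> integrable lborel (\<lambda>x. (cmod (f x))\<^sup>2) \<Longrightarrow> f \<in> L2"
  by (simp add: L2_def)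

lemma L2_measurable: "f \<in> L2 \<Longrightarrow> f \<in> borel_measurable borel"
  by (simp add: L2_def)

lemma L2_integrable_square: "f \<in> L2 \<Longrightarrow> integrable lborel (\<lambda>x. (cmod (f x))\<^sup>2)"
  by (simp add: L2_def)

lemma L2_dominated:
  assumes "f \<in> L2" "g \<in> borel_measurable lborel" "AE x in lborel. cmod (g x) \<le> cmod (f x)"
  shows "g \<in> L2"
proof (rule L2I[OF assms(2)])
  show "integrable lborel (\<lambda>x. (cmod (g x))\<^sup>2)"
  proof (rule Bochner_Integration.integrable_bound[OF L2_integrable_square[OF assms(1)]])
    show "AE x in lborel. norm ((cmod (g x))\<^sup>2) \<le> norm ((cmod (f x))\<^sup>2)"
      using assms(3) by eventually_elim (auto intro!: power_mono)
  qed (use assms(2) in measurable)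
qed

lemma integrable_L2_mult:
  assumes "f \<in> L2" "g \<in> L2"
  shows "integrable lborel (\<lambda>x. f x * g x)"
proof (rule Bochner_Integration.integrable_bound)
  show "integrable lborel (\<lambda>x. ((cmod (f x))\<^sup>2 + (cmod (g x))\<^sup>2) / 2)"
    using L2_integrable_square[OF assms(1)] L2_integrable_square[OF assms(2)] by auto
  have [measurable]: "f \<in> borel_measurable borel" "g \<in> borel_measurable borel"
    using assms by (auto intro: L2_measurable)
  show "(\<lambda>x. f x * g x) \<in> borel_measurable lborel" by measurable
  show "AE x in lborel. norm (f x * g x) \<le> norm (((cmod (f x))\<^sup>2 + (cmod (g x))\<^sup>2) / 2)"
  proof (intro AE_I2)
    fix x
    have "2 * (cmod (f x) * cmod (g x)) \<le> (cmod (f x))\<^sup>2 + (cmod (g x))\<^sup>2"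
      using sum_squares_bound[of "cmod (f x)" "cmod (g x)"] by (simp add: mult_ac)
    then show "norm (f x * g x) \<le> norm (((cmod (f x))\<^sup>2 + (cmod (g x))\<^sup>2) / 2)"
      by (simp add: norm_mult)
  qed
qed

lemma L2_cnj:
  assumes "f \<in> L2" shows "(\<lambda>x. cnj (f x)) \<in> L2"
proof (rule L2_dominated[OF assms])
  have [measurable]: "f \<in> borel_measurable borel" using assms by (rule L2_measurable)
  show "(\<lambda>x. cnj (f x)) \<in> borel_measurable lborel" by measurable
qed simp

lemma L2_cmod:
  assumes "f \<in> L2" shows "(\<lambda>x. complex_of_real (cmod (f x))) \<in> L2"
proof (rule L2_dominated[OF assms])
  have [measurable]: "f \<in> borel_measurable borel" using assms by (rule L2_measurable)
  show "(\<lambda>x. complex_of_real (cmod (f x))) \<in> borel_measurable lborel" by measurable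
qed simp

lemma integrable_inner_L2: "f \<in> L2 \<Longrightarrow> g \<in> L2 \<Longrightarrow> integrable lborel (\<lambda>x. cnj (f x) * g x)"
  by (intro integrable_L2_mult L2_cnj)

lemma L2_add:
  assumes "f \<in> L2" "g \<in> L2"
  shows "(\<lambda>x. f x + g x) \<in> L2"
proof (rule L2I)
  have [measurable]: "f \<in> borel_measurable borel" "g \<in> borel_measurable borel"
    using assms by (auto intro: L2_measurable)
  show "(\<lambda>x. f x + g x) \<in> borel_measurable lborel" by measurable
  show "integrable lborel (\<lambda>x. (cmod (f x + g x))\<^sup>2)"
  proof (rule Bochner_Integration.integrable_bound)
    show "integrable lborel (\<lambda>x. 2 * (cmod (f x))\<^sup>2 + 2 * (cmod (g x))\<^sup>2)"
      using L2_integrable_square[OF assms(1)] L2_integrable_square[OF assms(2)] by auto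
    show "(\<lambda>x. (cmod (f x + g x))\<^sup>2) \<in> borel_measurable lborel" by measurable
    show "AE x in lborel. norm ((cmod (f x + g x))\<^sup>2) \<le> norm (2 * (cmod (f x))\<^sup>2 + 2 * (cmod (g x))\<^sup>2)"
    proof (intro AE_I2)
      fix x
      have "(cmod (f x + g x))\<^sup>2 \<le> (cmod (f x) + cmod (g x))\<^sup>2"
        by (intro power_mono norm_triangle_ineq) auto
      also have "\<dots> \<le> 2 * (cmod (f x))\<^sup>2 + 2 * (cmod (g x))\<^sup>2"
        using sum_squares_bound[of "cmod (f x)" "cmod (g x)"] by (simp add: power2_eq_square algebra_simps)
      finally show "norm ((cmod (f x + g x))\<^sup>2) \<le> norm (2 * (cmod (f x))\<^sup>2 + 2 * (cmod (g x))\<^sup>2)"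
        by simp
    qed
  qed
qed

lemma L2_cmult:
  assumes "f \<in> L2" shows "(\<lambda>x. c * f x) \<in> L2"
proof (rule L2I)
  have [measurable]: "f \<in> borel_measurable borel" using assms by (rule L2_measurable)
  show "(\<lambda>x. c * f x) \<in> borel_measurable lborel" by measurable
  have "integrable lborel (\<lambda>x. (cmod c)\<^sup>2 * (cmod (f x))\<^sup>2)"
    using L2_integrable_square[OF assms] by auto
  then show "integrable lborel (\<lambda>x. (cmod (c * f x))\<^sup>2)"
    by (simp add: norm_mult power_mult_distrib)
qed

lemma L2_zero: "(\<lambda>x. 0) \<in> L2"
  by (rule L2I) auto

lemma L2_diff: "f \<in> L2 \<Longrightarrow> g \<in> L2 \<Longrightarrow> (\<lambda>x. f x - g x) \<in> L2"
  using L2_add[OF _ L2_cmult[of g "-1"]] by simp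

lemma L2_sum: "(\<And>i. i \<in> I \<Longrightarrow> F i \<in> L2) \<Longrightarrow> (\<lambda>x. \<Sum>i\<in>I. F i x) \<in> L2"
  by (induction I rule: infinite_finite_induct) (simp_all add: L2_zero L2_add)

lemma inner_L2_cong_AE:
  assumes "f \<in> L2" "f' \<in> L2" "g \<in> L2" "g' \<in> L2"
    and "AE x in lborel. f x = f' x" "AE x in lborel. g x = g' x"
  shows "inner_L2 f g = inner_L2 f' g'"
proof -
  have [measurable]: "f \<in> borel_measurable borel" "g \<in> borel_measurable borel"
    "f' \<in> borel_measurable borel" "g' \<in> borel_measurable borel"
    using assms(1-4) by (auto intro: L2_measurable)
  show ?thesis
    unfolding inner_L2_def
  proof (rule integral_cong_AE)
    show "AE x in lborel. cnj (f x) * g x = cnj (f' x) * g' x"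
      using assms(5,6) by eventually_elim simp
  qed measurable
qed

lemma AE_eq_0_if_integral_square_eq_0:
  assumes "w \<in> L2" "(LINT x|lborel. (cmod (w x))\<^sup>2) = 0"
  shows "AE x in lborel. w x = 0"
proof -
  have "AE x in lborel. (cmod (w x))\<^sup>2 = 0"
    using integral_nonneg_eq_0_iff_AE[OF L2_integrable_square[OF assms(1)]] assms(2) by auto
  then show ?thesis by auto
qed

lemma norm_L2_limit_unique:
  assumes P: "\<And>N. P N \<in> L2" and s: "s \<in> L2" and s': "s' \<in> L2"
    and lim: "(\<lambda>N. norm_L2 (\<lambda>x. P N x - s x)) \<longlonglongrightarrow> 0"
    and lim': "(\<lambda>N. norm_L2 (\<lambda>x. P N x - s' x)) \<longlonglongrightarrow> 0"
  shows "AE x in lborel. s x = s' x"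
proof -
  have int: "integrable lborel (\<lambda>x. (cmod (f x - g x))\<^sup>2)" if "f \<in> L2" "g \<in> L2" for f g
    using that by (intro L2_integrable_square L2_diff)
  have sq: "(norm_L2 (\<lambda>x. f x - g x))\<^sup>2 = (LINT x|lborel. (cmod (f x - g x))\<^sup>2)" for f g
    unfolding norm_L2_def by (subst real_sqrt_pow2) (auto intro!: integral_nonneg_AE)
  define D where "D = (\<lambda>N. 2 * (LINT x|lborel. (cmod (P N x - s x))\<^sup>2)
    + 2 * (LINT x|lborel. (cmod (P N x - s' x))\<^sup>2))"
  have "(\<lambda>N. 2 * (norm_L2 (\<lambda>x. P N x - s x))\<^sup>2 + 2 * (norm_L2 (\<lambda>x. P N x - s' x))\<^sup>2) \<longlonglongrightarrow> 2 * 0\<^sup>2 + 2 * 0\<^sup>2"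
    by (intro tendsto_intros lim lim')
  then have "D \<longlonglongrightarrow> 0"
    by (simp add: D_def sq)
  moreover have "(LINT x|lborel. (cmod (s x - s' x))\<^sup>2) \<le> D N" for N
  proof -
    have "(cmod (s x - s' x))\<^sup>2 \<le> 2 * (cmod (P N x - s x))\<^sup>2 + 2 * (cmod (P N x - s' x))\<^sup>2" for x
    proof -
      have "cmod (s x - s' x) \<le> cmod (P N x - s x) + cmod (P N x - s' x)"
        using norm_triangle_ineq4[of "P N x - s' x" "P N x - s x"] by (simp add: norm_minus_commute)
      then have "(cmod (s x - s' x))\<^sup>2 \<le> (cmod (P N x - s x) + cmod (P N x - s' x))\<^sup>2"
        by (intro power_mono) auto
      also have "\<dots> \<le> 2 * (cmod (P N x - s x))\<^sup>2 + 2 * (cmod (P N x - s' x))\<^sup>2"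
        using sum_squares_bound[of "cmod (P N x - s x)" "cmod (P N x - s' x)"]
        by (simp add: power2_eq_square algebra_simps)
      finally show ?thesis .
    qed
    then have "(LINT x|lborel. (cmod (s x - s' x))\<^sup>2)
        \<le> (LINT x|lborel. 2 * (cmod (P N x - s x))\<^sup>2 + 2 * (cmod (P N x - s' x))\<^sup>2)"
      using int[OF s s'] int[OF P s] int[OF P s'] by (intro integral_mono) auto
    also have "\<dots> = D N"
      using int[OF P s] int[OF P s'] by (simp add: D_def)
    finally show ?thesis .
  qed
  ultimately have "(LINT x|lborel. (cmod (s x - s' x))\<^sup>2) \<le> 0"
    by (intro tendsto_lowerbound[of D] always_eventually) auto
  moreover have "(LINT x|lborel. (cmod (s x - s' x))\<^sup>2) \<ge> 0"
    by (intro integral_nonneg_AE) auto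
  ultimately have "AE x in lborel. s x - s' x = 0"
    by (intro AE_eq_0_if_integral_square_eq_0 L2_diff s s') simp
  then show ?thesis by auto
qed

lemma tendsto_integral_L2_mult_of_real:
  assumes F: "F \<in> L2" and B: "(\<lambda>x. complex_of_real (B x)) \<in> L2"
    and meas: "\<And>n. \<phi> n \<in> borel_measurable borel"
    and bound: "\<And>n x. \<bar>\<phi> n x\<bar> \<le> B x"
    and lim: "\<And>x. (\<lambda>n. \<phi> n x) \<longlonglongrightarrow> \<psi> x"
  shows "(\<lambda>n. LINT x|lborel. F x * complex_of_real (\<phi> n x))
      \<longlonglongrightarrow> (LINT x|lborel. F x * complex_of_real (\<psi> x))"
proof (rule integral_dominated_convergence[where w="\<lambda>x. norm (F x * complex_of_real (B x))"])
  have [measurable]: "F \<in> borel_measurable borel" using F by (rule L2_measurable)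
  have [measurable]: "\<phi> n \<in> borel_measurable borel" for n using meas .
  have [measurable]: "\<psi> \<in> borel_measurable borel"
    using lim meas by (rule borel_measurable_LIMSEQ_real)
  show "(\<lambda>x. F x * complex_of_real (\<psi> x)) \<in> borel_measurable lborel" by measurable
  show "(\<lambda>x. F x * complex_of_real (\<phi> n x)) \<in> borel_measurable lborel" for n by measurable
  show "integrable lborel (\<lambda>x. norm (F x * complex_of_real (B x)))"
    by (intro integrable_norm integrable_L2_mult F B)
  show "AE x in lborel. (\<lambda>n. F x * complex_of_real (\<phi> n x)) \<longlonglongrightarrow> F x * complex_of_real (\<psi> x)"
    by (intro AE_I2 tendsto_mult tendsto_const tendsto_of_real lim)
  show "AE x in lborel. norm (F x * complex_of_real (\<phi> n x)) \<le> norm (F x * complex_of_real (B x))" for n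
    using bound[of n] by (intro AE_I2) (auto simp: norm_mult intro!: mult_left_mono order_trans[OF _ abs_ge_self])
qed

lemma norm_L2_sum_tendsto_0:
  assumes I: "finite I" and F: "\<And>i. i \<in> I \<Longrightarrow> F i \<in> L2"
    and c: "\<And>i. i \<in> I \<Longrightarrow> (\<lambda>N. c N i) \<longlonglongrightarrow> 0"
  shows "(\<lambda>N. norm_L2 (\<lambda>x. \<Sum>i\<in>I. c N i * F i x)) \<longlonglongrightarrow> 0"
proof -
  have "\<forall>i\<in>I. \<exists>K>0. \<forall>N. norm (c N i) \<le> K"
    using c by (metis BseqE convergentI convergent_imp_Bseq)
  then obtain K where K: "\<And>i N. i \<in> I \<Longrightarrow> norm (c N i) \<le> K i" by metis
  define W where "W x = (\<Sum>i\<in>I. K i * cmod (F i x))" for x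
  have "(\<lambda>x. \<Sum>i\<in>I. complex_of_real (K i) * complex_of_real (cmod (F i x))) \<in> L2"
    by (intro L2_sum L2_cmult L2_cmod F)
  then have W: "(\<lambda>x. complex_of_real (W x)) \<in> L2"
    by (simp add: W_def)
  have int: "integrable lborel (\<lambda>x. (W x)\<^sup>2)"
    using L2_integrable_square[OF W] by simp
  have lim: "AE x in lborel. (\<lambda>N. (cmod (\<Sum>i\<in>I. c N i * F i x))\<^sup>2) \<longlonglongrightarrow> 0"
  proof (intro AE_I2)
    fix x
    have "(\<lambda>N. \<Sum>i\<in>I. c N i * F i x) \<longlonglongrightarrow> (\<Sum>i\<in>I. 0 * F i x)"
      using c by (intro tendsto_sum tendsto_mult tendsto_const)
    then show "(\<lambda>N. (cmod (\<Sum>i\<in>I. c N i * F i x))\<^sup>2) \<longlonglongrightarrow> 0"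
      using tendsto_power[OF tendsto_norm, of _ _ _ 2] by fastforce
  qed
  have bound: "AE x in lborel. norm ((cmod (\<Sum>i\<in>I. c N i * F i x))\<^sup>2) \<le> (W x)\<^sup>2" for N
  proof (intro AE_I2)
    fix x
    have "cmod (\<Sum>i\<in>I. c N i * F i x) \<le> (\<Sum>i\<in>I. cmod (c N i * F i x))"
      by (rule norm_sum)
    also have "\<dots> \<le> W x"
      unfolding W_def by (intro sum_mono) (auto simp: norm_mult intro!: mult_right_mono K)
    finally show "norm ((cmod (\<Sum>i\<in>I. c N i * F i x))\<^sup>2) \<le> (W x)\<^sup>2"
      by (simp add: power_mono)
  qed
  have meas: "(\<lambda>x. \<Sum>i\<in>I. c N i * F i x) \<in> borel_measurable borel" for N
    by (intro L2_measurable L2_sum L2_cmult F)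
  have "(\<lambda>N. LINT x|lborel. (cmod (\<Sum>i\<in>I. c N i * F i x))\<^sup>2) \<longlonglongrightarrow> (LINT (x::real)|lborel. 0)"
  proof (rule integral_dominated_convergence[OF _ _ int lim bound])
    show "(\<lambda>x. (cmod (\<Sum>i\<in>I. c N i * F i x))\<^sup>2) \<in> borel_measurable lborel" for N
      using meas[of N] by measurable
  qed simp
  then have "(\<lambda>N. sqrt (LINT x|lborel. (cmod (\<Sum>i\<in>I. c N i * F i x))\<^sup>2)) \<longlonglongrightarrow> sqrt 0"
    by (intro tendsto_real_sqrt) simp
  then show ?thesis by (simp add: norm_L2_def)
qed

section \<open>Gaussian moments\<close>

lemma integrable_abs_power_gaussian:
  fixes c :: real assumes c: "c > 0"
  shows "integrable lborel (\<lambda>x. \<bar>x\<bar> ^ k * exp (- c * x\<^sup>2))"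
proof -
  define \<sigma> where "\<sigma> = sqrt (1 / (2 * c))"
  have \<sigma>: "\<sigma> > 0" "2 * \<sigma>\<^sup>2 = 1 / c" using c by (simp_all add: \<sigma>_def)
  have "integrable lborel (\<lambda>x. sqrt (2 * pi * \<sigma>\<^sup>2) * (normal_density 0 \<sigma> x * \<bar>x - 0\<bar> ^ k))"
    using integrable_normal_moment_abs[OF \<sigma>(1), of 0 k] by (rule integrable_mult_right)
  moreover have eq: "sqrt (2 * pi * \<sigma>\<^sup>2) * (normal_density 0 \<sigma> x * \<bar>x - 0\<bar> ^ k)
      = \<bar>x\<bar> ^ k * exp (- c * x\<^sup>2)" for x
  proof -
    have "exp (- (x - 0)\<^sup>2 / (2 * \<sigma>\<^sup>2)) = exp (- c * x\<^sup>2)" by (simp add: \<sigma>(2))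
    then show ?thesis using \<sigma>(1) by (simp add: normal_density_def field_simps)
  qed
  ultimately show ?thesis by (simp only: eq)
qed

lemma L2_power_gaussian:
  fixes c :: real assumes c: "c > 0"
  shows "(\<lambda>x. complex_of_real (x ^ k * exp (- c * x\<^sup>2))) \<in> L2"
proof (rule L2I)
  show "(\<lambda>x. complex_of_real (x ^ k * exp (- c * x\<^sup>2))) \<in> borel_measurable lborel" by measurable
  have "(cmod (complex_of_real (x ^ k * exp (- c * x\<^sup>2))))\<^sup>2 = \<bar>x\<bar> ^ (2*k) * exp (- (2*c) * x\<^sup>2)" for x
  proof -
    have "(cmod (complex_of_real (x ^ k * exp (- c * x\<^sup>2))))\<^sup>2 = (x ^ k * exp (- c * x\<^sup>2))\<^sup>2"
      by (simp only: norm_of_real power2_abs)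
    also have "\<dots> = \<bar>x\<bar> ^ (2*k) * (exp (- c * x\<^sup>2))\<^sup>2"
      by (simp add: power_mult_distrib power_even_abs mult.commute flip: power_mult)
    also have "(exp (- c * x\<^sup>2))\<^sup>2 = exp (- (2*c) * x\<^sup>2)"
      by (simp add: power2_eq_square exp_add[symmetric])
    finally show ?thesis .
  qed
  then show "integrable lborel (\<lambda>x. (cmod (complex_of_real (x ^ k * exp (- c * x\<^sup>2))))\<^sup>2)"
    using integrable_abs_power_gaussian[of "2*c" "2*k"] c by simp
qed

section \<open>Smooth functions in the domains of p and t\<close>

definition continuous_compact_support :: "(real \<Rightarrow> real) \<Rightarrow> bool" where
  "continuous_compact_support g \<longleftrightarrow> (\<forall>x. isCont g x) \<and> (\<exists>M. \<forall>x. M < \<bar>x\<bar> \<longrightarrow> g x = 0)"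

lemma isCont_borel_measurable: "(\<And>x. isCont g x) \<Longrightarrow> (g::real \<Rightarrow> real) \<in> borel_measurable borel"
  by (intro borel_measurable_continuous_onI continuous_at_imp_continuous_on) auto

lemma smooth_borel_measurable: "smooth u \<Longrightarrow> u \<in> borel_measurable borel"
  by (intro isCont_borel_measurable smooth_isCont)

lemma continuous_compact_support_integrable:
  assumes "continuous_compact_support g" shows "integrable lborel g"
proof -
  obtain M where M: "\<And>x. M < \<bar>x\<bar> \<Longrightarrow> g x = 0" and cont: "\<And>x. isCont g x"
    using assms unfolding continuous_compact_support_def by blast
  have "integrable lborel (\<lambda>x. g x * indicator {-\<bar>M\<bar>..\<bar>M\<bar>} x)"
    using cont by (intro borel_integrable_atLeastAtMost) auto
  moreover have "g x * indicator {-\<bar>M\<bar>..\<bar>M\<bar>} x = g x" for x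
  proof (cases "\<bar>x\<bar> \<le> \<bar>M\<bar>")
    case False
    then show ?thesis using M[of x] by simp
  qed (simp add: indicator_def abs_le_iff)
  ultimately show ?thesis by simp
qed

lemma continuous_compact_support_mult:
  "continuous_compact_support g \<Longrightarrow> (\<And>x. isCont h x) \<Longrightarrow> continuous_compact_support (\<lambda>x. h x * g x)"
  unfolding continuous_compact_support_def by (auto intro!: continuous_intros)

lemma L2_continuous_compact_support:
  assumes g: "continuous_compact_support g" shows "(\<lambda>x. complex_of_real (g x)) \<in> L2"
proof (rule L2I)
  have [measurable]: "g \<in> borel_measurable borel"
    using g unfolding continuous_compact_support_def by (blast intro: isCont_borel_measurable)
  show "(\<lambda>x. complex_of_real (g x)) \<in> borel_measurable lborel" by measurable
  have "continuous_compact_support (\<lambda>x. g x * g x)"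
    using continuous_compact_support_mult[OF g] g unfolding continuous_compact_support_def by blast
  then show "integrable lborel (\<lambda>x. (cmod (complex_of_real (g x)))\<^sup>2)"
    by (auto simp: power2_eq_square dest: continuous_compact_support_integrable)
qed

lemma DERIV_eq_0_on_open_zero_set:
  assumes "(u has_real_derivative D) (at x)" "open S" "x \<in> S" "\<And>y. y \<in> S \<Longrightarrow> u y = 0"
  shows "D = 0"
proof -
  have "((\<lambda>y. 0) has_real_derivative 0) (at x)" by simp
  then have "(u has_real_derivative 0) (at x)"
    by (rule has_field_derivative_transform_within_open[OF _ assms(2,3)]) (use assms(4) in auto)
  then show ?thesis using DERIV_unique assms(1) by blast
qed

lemma DERIV_eq_0_outside:
  assumes "(u has_real_derivative D) (at x)" "\<And>y. M < \<bar>y\<bar> \<Longrightarrow> u y = 0" "M < \<bar>x\<bar>"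
  shows "D = 0"
proof (rule DERIV_eq_0_on_open_zero_set[OF assms(1)])
  show "open {y::real. M < \<bar>y\<bar>}" by (intro open_Collect_less continuous_intros)
qed (use assms in auto)

lemma bump_has_bounded_derivative:
  obtains c' K where "\<And>x. (bump has_real_derivative c' x) (at x)" "\<And>x. isCont c' x"
    "\<And>x. \<bar>c' x\<bar> \<le> K"
proof -
  obtain c' where d: "\<And>x. (bump has_real_derivative c' x) (at x)" and "smooth c'"
    using smooth_bump by (blast elim: smooth_has_derivative)
  then have cont: "\<And>x. isCont c' x" by (simp add: smooth_isCont)
  have "c' x = 0" if "1 < \<bar>x\<bar>" for x
    using DERIV_eq_0_outside[OF d bump_eq_0 that] .
  then have "c' ` UNIV \<subseteq> c' ` {-1..1} \<union> {0}"
    by (force simp: abs_le_iff not_less)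
  moreover have "compact (c' ` {-1..1})"
    using cont by (intro compact_continuous_image continuous_at_imp_continuous_on) auto
  ultimately have "bounded (range c')"
    by (meson bounded_Un bounded_insert bounded_empty bounded_subset compact_imp_bounded)
  then obtain K where "\<And>x. \<bar>c' x\<bar> \<le> K"
    unfolding bounded_iff by auto
  with d cont show ?thesis using that by blast
qed

lemma test_funD:
  assumes "test_fun \<phi>"
  shows "(\<phi> has_real_derivative deriv \<phi> x) (at x)" "isCont \<phi> x" "isCont (deriv \<phi>) x"
    and "\<exists>M. \<forall>x. M < \<bar>x\<bar> \<longrightarrow> \<phi> x = 0"
proof -
  have d: "\<And>k x. ((deriv ^^ k) \<phi>) field_differentiable (at x)" and b: "bounded {x. \<phi> x \<noteq> 0}"
    using assms unfolding test_fun_def by auto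
  show "(\<phi> has_real_derivative deriv \<phi> x) (at x)"
    using d[of 0] by (simp add: DERIV_deriv_iff_field_differentiable)
  show "isCont \<phi> x" "isCont (deriv \<phi>) x"
    using d[of 0 x] d[of 1 x] by (simp_all add: field_differentiable_imp_continuous_at)
  from b obtain M where "\<And>x. \<phi> x \<noteq> 0 \<Longrightarrow> norm x \<le> M" unfolding bounded_iff by auto
  then show "\<exists>M. \<forall>x. M < \<bar>x\<bar> \<longrightarrow> \<phi> x = 0" by (intro exI[of _ M]) force
qed

lemma integral_by_parts_compact_support:
  fixes u v :: "real \<Rightarrow> real"
  assumes du: "\<And>x. (u has_real_derivative u' x) (at x)" and dv: "\<And>x. (v has_real_derivative v' x) (at x)"
    and cu': "\<And>x. isCont u' x" and cv': "\<And>x. isCont v' x"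
    and M: "\<And>x. M < \<bar>x\<bar> \<Longrightarrow> u x = 0"
  shows "(LBINT x. u x * v' x) = - (LBINT x. u' x * v x)"
proof -
  have cu: "isCont u x" and cv: "isCont v x" for x
    using DERIV_isCont du dv by blast+
  have M': "\<And>x. M < \<bar>x\<bar> \<Longrightarrow> u' x = 0" by (rule DERIV_eq_0_outside[OF du M])
  have "continuous_compact_support u" "continuous_compact_support u'"
    unfolding continuous_compact_support_def using cu cu' M M' by blast+
  then have "continuous_compact_support (\<lambda>x. v' x * u x)" "continuous_compact_support (\<lambda>x. v x * u' x)"
    using cv cv' by (blast intro: continuous_compact_support_mult)+
  then have int: "integrable lborel (\<lambda>x. u x * v' x)" "integrable lborel (\<lambda>x. u' x * v x)"
    by (auto dest!: continuous_compact_support_integrable simp: mult.commute)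
  define M1 where "M1 = \<bar>M\<bar> + 1"
  have "(LBINT x. indicat_real {-M1..M1} x *\<^sub>R (u' x * v x + v' x * u x))
      = u M1 * v M1 - u (-M1) * v (-M1)"
  proof (rule integral_FTC_atLeastAtMost[where F="\<lambda>x. u x * v x"])
    show "- M1 \<le> M1" by (simp add: M1_def)
    fix x
    show "((\<lambda>x. u x * v x) has_vector_derivative u' x * v x + v' x * u x) (at x within {- M1..M1})"
      using DERIV_mult[OF du dv]
      by (simp add: has_real_derivative_iff_has_vector_derivative[symmetric] has_field_derivative_at_within)
  next
    show "continuous_on {- M1..M1} (\<lambda>x. u' x * v x + v' x * u x)"
      using cu cu' cv cv' by (intro continuous_at_imp_continuous_on ballI continuous_intros) auto
  qed
  also have "\<dots> = 0"
    using M[of M1] M[of "-M1"] by (simp add: M1_def)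
  finally have "0 = (LBINT x. indicat_real {-M1..M1} x *\<^sub>R (u' x * v x + v' x * u x))" ..
  also have "\<dots> = (LBINT x. u' x * v x + u x * v' x)"
  proof (intro Bochner_Integration.integral_cong refl)
    fix x
    show "indicat_real {-M1..M1} x *\<^sub>R (u' x * v x + v' x * u x) = u' x * v x + u x * v' x"
      using M[of x] M'[of x] by (cases "\<bar>x\<bar> \<le> M1") (auto simp: indicator_def abs_le_iff M1_def)
  qed
  also have "\<dots> = (LBINT x. u' x * v x) + (LBINT x. u x * v' x)"
    using int by simp
  finally show ?thesis by simp
qed

lemma p_rel_smooth_compact_support:
  assumes u: "smooth u" and du: "\<And>x. (u has_real_derivative u' x) (at x)"
    and M: "\<And>x. M < \<bar>x\<bar> \<Longrightarrow> u x = 0"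
  shows "p_rel (\<lambda>x. complex_of_real (u x)) (\<lambda>x. - \<i> * complex_of_real (u' x))"
proof -
  have cu: "\<And>x. isCont u x" and cu': "\<And>x. isCont u' x"
    using smooth_isCont u smooth_derivative[OF u du] by auto
  have "continuous_compact_support u" "continuous_compact_support u'"
    unfolding continuous_compact_support_def using cu cu' M DERIV_eq_0_outside[OF du M] by blast+
  then show ?thesis unfolding p_rel_def
  proof (intro conjI allI impI L2_continuous_compact_support L2_cmult)
    fix \<phi> assume \<phi>: "test_fun \<phi>"
    have "(LINT x|lborel. complex_of_real (u x) * complex_of_real (deriv \<phi> x))
        = complex_of_real (LBINT x. u x * deriv \<phi> x)"
      by (simp flip: integral_complex_of_real)
    also have "\<dots> = - complex_of_real (LBINT x. u' x * \<phi> x)"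
      using integral_by_parts_compact_support[OF du test_funD(1)[OF \<phi>] cu' test_funD(3)[OF \<phi>] M] by simp
    also have "complex_of_real (LBINT x. u' x * \<phi> x)
        = (LINT x|lborel. \<i> * (- \<i> * complex_of_real (u' x)) * complex_of_real (\<phi> x))"
      by (simp flip: integral_complex_of_real)
    finally show "(LINT x|lborel. complex_of_real (u x) * complex_of_real (deriv \<phi> x))
       = - (LINT x|lborel. \<i> * (- \<i> * complex_of_real (u' x)) * complex_of_real (\<phi> x))" .
  qed
qed

lemma bump_cutoffs:
  obtains \<kappa> \<kappa>' :: "nat \<Rightarrow> real \<Rightarrow> real" and K :: real
  where "\<And>n. smooth (\<kappa> n)" "\<And>n x. (\<kappa> n has_real_derivative \<kappa>' n x) (at x)"
    "\<And>n. bounded {x. \<kappa> n x \<noteq> 0}" "\<And>n. \<kappa>' n \<in> borel_measurable borel"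
    "\<And>n x. 0 \<le> \<kappa> n x \<and> \<kappa> n x \<le> 1" "\<And>n x. \<bar>\<kappa>' n x\<bar> \<le> K"
    "\<And>x. (\<lambda>n. \<kappa> n x) \<longlonglongrightarrow> 1" "\<And>x. (\<lambda>n. \<kappa>' n x) \<longlonglongrightarrow> 0"
proof -
  obtain c' K where dc: "\<And>x. (bump has_real_derivative c' x) (at x)" and cc': "\<And>x. isCont c' x"
    and K: "\<And>x. \<bar>c' x\<bar> \<le> K"
    using bump_has_bounded_derivative by blast
  have [measurable]: "c' \<in> borel_measurable borel"
    using isCont_borel_measurable[OF cc'] .
  define R where "R n = real (Suc n)" for n
  have R: "R n \<ge> 1" for n by (simp add: R_def)
  have scale: "(\<lambda>n. y / R n) \<longlonglongrightarrow> 0" for y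
    using tendsto_mult[OF tendsto_const[of y] LIMSEQ_inverse_real_of_nat] by (simp add: R_def divide_inverse)
  show ?thesis
  proof (rule that[of "\<lambda>n x. bump (x / R n)" "\<lambda>n x. c' (x / R n) / R n" K])
    fix n
    have "smooth (\<lambda>x. bump ((1 / R n) * x))"
      by (intro smooth_comp[OF smooth_bump] smooth_cmult smooth_ident)
    then show "smooth (\<lambda>x. bump (x / R n))" by (simp add: mult.commute)
    have "{x. bump (x / R n) \<noteq> 0} \<subseteq> {-R n..R n}"
      using R[of n] bump_eq_0[of "_ / R n"] by (force simp: abs_le_iff field_simps not_less)
    then show "bounded {x. bump (x / R n) \<noteq> 0}" by (rule bounded_subset[OF bounded_closed_interval])
    show "(\<lambda>x. c' (x / R n) / R n) \<in> borel_measurable borel" by measurable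
    fix x
    have "((\<lambda>x. x / R n) has_real_derivative 1 / R n) (at x)"
      using R[of n] by (auto intro!: derivative_eq_intros)
    from DERIV_chain2[OF dc this] show "((\<lambda>x. bump (x / R n)) has_real_derivative c' (x / R n) / R n) (at x)"
      by simp
    show "0 \<le> bump (x / R n) \<and> bump (x / R n) \<le> 1" by (simp add: bump_nonneg bump_le_1)
    have "\<bar>c' (x / R n) / R n\<bar> = \<bar>c' (x / R n)\<bar> / R n"
      using R[of n] by simp
    also have "\<dots> \<le> \<bar>c' (x / R n)\<bar> / 1"
      using R[of n] by (intro divide_left_mono) auto
    also have "\<dots> \<le> K"
      using K[of "x / R n"] by simp
    finally show "\<bar>c' (x / R n) / R n\<bar> \<le> K" .
  next
    fix x
    show "(\<lambda>n. bump (x / R n)) \<longlonglongrightarrow> 1"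
      using isCont_tendsto_compose[OF smooth_isCont[OF smooth_bump] scale[of x]] by (simp add: bump_0)
    show "(\<lambda>n. c' (x / R n) / R n) \<longlonglongrightarrow> 0"
      using tendsto_mult[OF isCont_tendsto_compose[OF cc' scale[of x]] LIMSEQ_inverse_real_of_nat]
      by (simp add: R_def divide_inverse)
  qed
qed

lemma smooth_cutoff_test_funs:
  assumes \<psi>: "smooth \<psi>" and d\<psi>: "\<And>x. (\<psi> has_real_derivative \<psi>' x) (at x)"
  obtains \<phi> \<phi>' :: "nat \<Rightarrow> real \<Rightarrow> real" and K :: real
  where "\<And>n. test_fun (\<phi> n)" "\<And>n x. deriv (\<phi> n) x = \<phi>' n x"
    "\<And>n. \<phi> n \<in> borel_measurable borel" "\<And>n. \<phi>' n \<in> borel_measurable borel"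
    "\<And>x. (\<lambda>n. \<phi> n x) \<longlonglongrightarrow> \<psi> x" "\<And>x. (\<lambda>n. \<phi>' n x) \<longlonglongrightarrow> \<psi>' x"
    "\<And>n x. \<bar>\<phi> n x\<bar> \<le> \<bar>\<psi> x\<bar>" "\<And>n x. \<bar>\<phi>' n x\<bar> \<le> \<bar>\<psi>' x\<bar> + K * \<bar>\<psi> x\<bar>"
proof -
  obtain \<kappa> \<kappa>' :: "nat \<Rightarrow> real \<Rightarrow> real" and K :: real
    where smooth: "\<And>n. smooth (\<kappa> n)" and d\<kappa>: "\<And>n x. (\<kappa> n has_real_derivative \<kappa>' n x) (at x)"
      and bounded: "\<And>n. bounded {x. \<kappa> n x \<noteq> 0}" and m\<kappa>': "\<And>n. \<kappa>' n \<in> borel_measurable borel"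
      and \<kappa>: "\<And>n x. 0 \<le> \<kappa> n x \<and> \<kappa> n x \<le> 1" and K: "\<And>n x. \<bar>\<kappa>' n x\<bar> \<le> K"
      and lim: "\<And>x. (\<lambda>n. \<kappa> n x) \<longlonglongrightarrow> 1" "\<And>x. (\<lambda>n. \<kappa>' n x) \<longlonglongrightarrow> 0"
    by (rule bump_cutoffs) blast
  have m\<psi>: "\<psi> \<in> borel_measurable borel" "\<psi>' \<in> borel_measurable borel"
    using smooth_borel_measurable \<psi> smooth_derivative[OF \<psi> d\<psi>] by auto
  have m\<kappa>: "\<kappa> n \<in> borel_measurable borel" for n
    using smooth_borel_measurable smooth by auto
  show ?thesis
  proof (rule that[of "\<lambda>n x. \<psi> x * \<kappa> n x" "\<lambda>n x. \<psi>' x * \<kappa> n x + \<psi> x * \<kappa>' n x" K])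
    fix n
    have "{x. \<psi> x * \<kappa> n x \<noteq> 0} \<subseteq> {x. \<kappa> n x \<noteq> 0}"
      by auto
    then show "test_fun (\<lambda>x. \<psi> x * \<kappa> n x)"
      by (intro test_funI smooth_mult \<psi> smooth bounded_subset[OF bounded[of n]])
    show "(\<lambda>x. \<psi> x * \<kappa> n x) \<in> borel_measurable borel"
      by (intro borel_measurable_times m\<psi> m\<kappa>)
    show "(\<lambda>x. \<psi>' x * \<kappa> n x + \<psi> x * \<kappa>' n x) \<in> borel_measurable borel"
      by (intro borel_measurable_add borel_measurable_times m\<psi> m\<kappa> m\<kappa>')
    fix x
    show "deriv (\<lambda>x. \<psi> x * \<kappa> n x) x = \<psi>' x * \<kappa> n x + \<psi> x * \<kappa>' n x"
      using DERIV_imp_deriv[OF DERIV_mult[OF d\<psi> d\<kappa>]] by (simp add: mult.commute)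
    show "\<bar>\<psi> x * \<kappa> n x\<bar> \<le> \<bar>\<psi> x\<bar>"
      using \<kappa>[of n x] by (simp add: abs_mult mult_left_le)
    have "\<bar>\<psi>' x * \<kappa> n x\<bar> \<le> \<bar>\<psi>' x\<bar>"
      using \<kappa>[of n x] by (simp add: abs_mult mult_left_le)
    moreover have "\<bar>\<psi> x * \<kappa>' n x\<bar> \<le> K * \<bar>\<psi> x\<bar>"
      using mult_left_mono[OF K[of n x] abs_ge_zero[of "\<psi> x"]] by (simp add: abs_mult mult.commute)
    moreover have "\<bar>\<psi>' x * \<kappa> n x + \<psi> x * \<kappa>' n x\<bar> \<le> \<bar>\<psi>' x * \<kappa> n x\<bar> + \<bar>\<psi> x * \<kappa>' n x\<bar>"
      by (rule abs_triangle_ineq)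
    ultimately show "\<bar>\<psi>' x * \<kappa> n x + \<psi> x * \<kappa>' n x\<bar> \<le> \<bar>\<psi>' x\<bar> + K * \<bar>\<psi> x\<bar>"
      by linarith
  next
    fix x
    show "(\<lambda>n. \<psi> x * \<kappa> n x) \<longlonglongrightarrow> \<psi> x"
      using tendsto_mult[OF tendsto_const lim(1)] by simp
    show "(\<lambda>n. \<psi>' x * \<kappa> n x + \<psi> x * \<kappa>' n x) \<longlonglongrightarrow> \<psi>' x"
      using tendsto_add[OF tendsto_mult[OF tendsto_const lim(1)] tendsto_mult[OF tendsto_const lim(2)]]
      by simp
  qed
qed

text \<open>The weak derivative may be tested against smooth functions that are merely square
  integrable together with their derivative: cut them off by \<open>bump (x / n)\<close> and let \<open>n \<to> \<infinity>\<close>.\<close>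

lemma p_rel_integration_by_parts:
  assumes pF: "p_rel F G"
    and \<psi>: "smooth \<psi>" and d\<psi>: "\<And>x. (\<psi> has_real_derivative \<psi>' x) (at x)"
    and L\<psi>: "(\<lambda>x. complex_of_real (\<psi> x)) \<in> L2" and L\<psi>': "(\<lambda>x. complex_of_real (\<psi>' x)) \<in> L2"
  shows "(LINT x|lborel. G x * complex_of_real (\<psi> x)) = \<i> * (LINT x|lborel. F x * complex_of_real (\<psi>' x))"
proof -
  obtain \<phi> \<phi>' :: "nat \<Rightarrow> real \<Rightarrow> real" and K :: real
    where test: "\<And>n. test_fun (\<phi> n)" and deriv: "\<And>n x. deriv (\<phi> n) x = \<phi>' n x"
      and meas: "\<And>n. \<phi> n \<in> borel_measurable borel" "\<And>n. \<phi>' n \<in> borel_measurable borel"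
      and lim: "\<And>x. (\<lambda>n. \<phi> n x) \<longlonglongrightarrow> \<psi> x" "\<And>x. (\<lambda>n. \<phi>' n x) \<longlonglongrightarrow> \<psi>' x"
      and bound: "\<And>n x. \<bar>\<phi> n x\<bar> \<le> \<bar>\<psi> x\<bar>" "\<And>n x. \<bar>\<phi>' n x\<bar> \<le> \<bar>\<psi>' x\<bar> + K * \<bar>\<psi> x\<bar>"
    by (rule smooth_cutoff_test_funs[OF \<psi> d\<psi>]) blast
  have FL: "F \<in> L2" and GL: "G \<in> L2" using pF unfolding p_rel_def by auto
  have weak: "(LINT x|lborel. F x * complex_of_real (\<phi>' n x))
      = - \<i> * (LINT x|lborel. G x * complex_of_real (\<phi> n x))" for n
  proof -
    have "(LINT x|lborel. F x * complex_of_real (deriv (\<phi> n) x))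
        = - (LINT x|lborel. \<i> * G x * complex_of_real (\<phi> n x))"
      using pF test[of n] unfolding p_rel_def by blast
    then show ?thesis by (simp add: deriv mult.assoc)
  qed
  have "(\<lambda>x. complex_of_real (\<bar>\<psi>' x\<bar> + K * \<bar>\<psi> x\<bar>)) \<in> L2"
    using L2_add[OF L2_cmod[OF L\<psi>'] L2_cmult[OF L2_cmod[OF L\<psi>], of "complex_of_real K"]] by simp
  then have lim_F: "(\<lambda>n. LINT x|lborel. F x * complex_of_real (\<phi>' n x))
      \<longlonglongrightarrow> (LINT x|lborel. F x * complex_of_real (\<psi>' x))"
    by (rule tendsto_integral_L2_mult_of_real[OF FL _ meas(2) bound(2) lim(2)])
  have "(\<lambda>x. complex_of_real \<bar>\<psi> x\<bar>) \<in> L2"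
    using L2_cmod[OF L\<psi>] by simp
  then have "(\<lambda>n. LINT x|lborel. G x * complex_of_real (\<phi> n x))
      \<longlonglongrightarrow> (LINT x|lborel. G x * complex_of_real (\<psi> x))"
    by (rule tendsto_integral_L2_mult_of_real[OF GL _ meas(1) bound(1) lim(1)])
  then have "(\<lambda>n. LINT x|lborel. F x * complex_of_real (\<phi>' n x))
      \<longlonglongrightarrow> - \<i> * (LINT x|lborel. G x * complex_of_real (\<psi> x))"
    unfolding weak by (rule tendsto_mult_left)
  with lim_F have "(LINT x|lborel. F x * complex_of_real (\<psi>' x))
      = - \<i> * (LINT x|lborel. G x * complex_of_real (\<psi> x))"
    by (rule LIMSEQ_unique)
  then show ?thesis by simp
qed

lemma t_rel_L2: "t_rel F k \<Longrightarrow> F \<in> L2 \<and> k \<in> L2"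
  unfolding t_rel_def p_rel_def by auto

lemma t_rel_smooth_vanishing_near_0:
  assumes u: "smooth u" and du: "\<And>x. (u has_real_derivative u' x) (at x)"
    and \<delta>: "\<delta> > 0" and near_0: "\<And>x. \<bar>x\<bar> < \<delta> \<Longrightarrow> u x = 0" and M: "\<And>x. M < \<bar>x\<bar> \<Longrightarrow> u x = 0"
  shows "\<exists>k. t_rel (\<lambda>x. complex_of_real (u x)) k"
proof -
  have cu': "\<And>x. isCont u' x" using smooth_isCont[OF smooth_derivative[OF u du]] .
  have near_0': "u' x = 0" if "\<bar>x\<bar> < \<delta>" for x
  proof (rule DERIV_eq_0_on_open_zero_set[OF du])
    show "open {y::real. \<bar>y\<bar> < \<delta>}" by (intro open_Collect_less continuous_intros)
  qed (use that near_0 in auto)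
  have "continuous_compact_support (\<lambda>x. u' x / x)"
    unfolding continuous_compact_support_def
  proof (intro conjI allI)
    fix x :: real
    show "isCont (\<lambda>x. u' x / x) x"
    proof (cases "x = 0")
      case True
      have "eventually (\<lambda>y. y \<in> {y::real. \<bar>y\<bar> < \<delta>}) (nhds x)"
        using \<delta> True by (intro eventually_nhds_in_open open_Collect_less continuous_intros) auto
      then have "eventually (\<lambda>y. u' y / y = 0) (nhds x)"
        by (rule eventually_mono) (auto intro: near_0')
      then show ?thesis using isCont_cong[of "\<lambda>y. u' y / y" "\<lambda>y. 0" x] by simp
    next
      case False then show ?thesis using cu'[of x] by (auto intro!: continuous_intros)
    qed
  next
    show "\<exists>M. \<forall>x. M < \<bar>x\<bar> \<longrightarrow> u' x / x = 0" using DERIV_eq_0_outside[OF du M] by auto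
  qed
  then have "(\<lambda>x. - \<i> * complex_of_real (u' x / x)) \<in> L2"
    by (intro L2_cmult L2_continuous_compact_support)
  then show ?thesis
    using p_rel_smooth_compact_support[OF u du M] unfolding t_rel_def by fastforce
qed

section \<open>Density of the domain of t\<close>

lemma smooth_approx_indicator_Ioo:
  obtains \<phi> :: "nat \<Rightarrow> real \<Rightarrow> real"
  where "\<And>n. smooth (\<phi> n)" "\<And>n. \<exists>\<delta>>0. \<forall>x. \<phi> n x \<noteq> 0 \<longrightarrow> a + \<delta> < x \<and> x < b - \<delta>"
    "\<And>n x. \<bar>\<phi> n x\<bar> \<le> indicator {a..b} x" "\<And>x. (\<lambda>n. \<phi> n x) \<longlonglongrightarrow> indicator {a<..<b} x"
proof -
  define R where "R n = real (Suc n)" for n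
  have R: "R n \<ge> 1" for n by (simp add: R_def)
  define \<phi> where "\<phi> n x = flat_step (R n * (x - a) - 1) * flat_step (R n * (b - x) - 1)" for n x
  have supp: "a + 1 / R n < x \<and> x < b - 1 / R n" if "\<phi> n x \<noteq> 0" for n x
  proof -
    have "R n * (x - a) - 1 > 0" "R n * (b - x) - 1 > 0"
      using that flat_step_eq_0 unfolding \<phi>_def by (metis mult_zero_left mult_zero_right not_le)+
    then show ?thesis using R[of n] by (auto simp: field_simps)
  qed
  have supp': "a < x \<and> x < b" if "\<phi> n x \<noteq> 0" for n x
    using supp[OF that] R[of n] by (smt (verit) divide_pos_pos)
  show ?thesis
  proof (rule that[of \<phi>])
    show "smooth (\<phi> n)" for n
      unfolding \<phi>_def
      by (intro smooth_mult smooth_comp[OF smooth_flat_step] smooth_diff smooth_const smooth_cmult smooth_ident)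
    show "\<exists>\<delta>>0. \<forall>x. \<phi> n x \<noteq> 0 \<longrightarrow> a + \<delta> < x \<and> x < b - \<delta>" for n
      using R[of n] supp by (intro exI[of _ "1 / R n"]) auto
    show "\<bar>\<phi> n x\<bar> \<le> indicator {a..b} x" for n x
      using supp'[of n x] flat_step_nonneg flat_step_le_1
      by (cases "\<phi> n x = 0") (auto simp: \<phi>_def abs_mult intro: mult_le_one)
    show "(\<lambda>n. \<phi> n x) \<longlonglongrightarrow> indicator {a<..<b} x" for x
    proof (cases "a < x \<and> x < b")
      case True
      have "filterlim (\<lambda>n. R n * c - 1) at_top sequentially" if "c > 0" for c
        unfolding R_def using that by real_asymp
      then have "(\<lambda>n. flat_step (R n * (x - a) - 1) * flat_step (R n * (b - x) - 1)) \<longlonglongrightarrow> 1 * 1"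
        using True by (intro tendsto_mult filterlim_compose[OF flat_step_tendsto_1]) auto
      then show ?thesis using True by (simp add: \<phi>_def)
    next
      case False
      then have "\<phi> n x = 0" for n using supp'[of n x] by blast
      then show ?thesis using False by (auto simp: indicator_def)
    qed
  qed
qed

lemma L2_indicator_Icc: "(\<lambda>x. complex_of_real (indicator {a..b} x)) \<in> L2"
proof (rule L2I)
  have "integrable lborel (\<lambda>x. 1 * indicat_real {a..b} x)"
    by (intro borel_integrable_atLeastAtMost) auto
  moreover have "(cmod (complex_of_real (indicator {a..b} x)))\<^sup>2 = 1 * indicat_real {a..b} x" for x
    by (simp add: indicator_def)
  ultimately show "integrable lborel (\<lambda>x. (cmod (complex_of_real (indicator {a..b} x)))\<^sup>2)"
    by presburger
qed measurable

lemma interval_integral_eq_0_if_orth_D_t: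
  assumes w: "w \<in> L2" and orth: "\<And>F k. t_rel F k \<Longrightarrow> inner_L2 w F = 0"
    and ab: "0 \<le> a \<or> b \<le> 0"
  shows "(LINT x|lborel. cnj (w x) * indicator {a<..<b} x) = 0"
proof -
  obtain \<phi> :: "nat \<Rightarrow> real \<Rightarrow> real"
    where smooth: "\<And>n. smooth (\<phi> n)" and supp: "\<And>n. \<exists>\<delta>>0. \<forall>x. \<phi> n x \<noteq> 0 \<longrightarrow> a + \<delta> < x \<and> x < b - \<delta>"
      and bound: "\<And>n x. \<bar>\<phi> n x\<bar> \<le> indicator {a..b} x" and lim: "\<And>x. (\<lambda>n. \<phi> n x) \<longlonglongrightarrow> indicator {a<..<b} x"
    by (rule smooth_approx_indicator_Ioo) blast
  have "(LINT x|lborel. cnj (w x) * complex_of_real (\<phi> n x)) = 0" for n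
  proof -
    obtain \<delta> where \<delta>: "\<delta> > 0" "\<And>x. \<phi> n x \<noteq> 0 \<Longrightarrow> a + \<delta> < x \<and> x < b - \<delta>"
      using supp[of n] by blast
    obtain u' where du: "\<And>x. (\<phi> n has_real_derivative u' x) (at x)"
      using smooth[of n] by (blast elim: smooth_has_derivative)
    have "\<phi> n x = 0" if "\<bar>x\<bar> < \<delta>" for x
      using \<delta>(2)[of x] that ab by (cases "\<phi> n x = 0") (auto simp: abs_less_iff)
    moreover have "\<phi> n x = 0" if "\<bar>a\<bar> + \<bar>b\<bar> < \<bar>x\<bar>" for x
      using \<delta> that by force
    ultimately obtain k where "t_rel (\<lambda>x. complex_of_real (\<phi> n x)) k"
      using t_rel_smooth_vanishing_near_0[OF smooth du \<delta>(1)] by blast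
    then show ?thesis using orth unfolding inner_L2_def by blast
  qed
  moreover have "(\<lambda>n. LINT x|lborel. cnj (w x) * complex_of_real (\<phi> n x))
      \<longlonglongrightarrow> (LINT x|lborel. cnj (w x) * complex_of_real (indicator {a<..<b} x))"
    using smooth_borel_measurable[OF smooth] bound lim
    by (rule tendsto_integral_L2_mult_of_real[OF L2_cnj[OF w] L2_indicator_Icc])
  ultimately show ?thesis
    by (simp add: of_real_indicator LIMSEQ_const_iff)
qed

lemma AE_eq_0_if_ray_integrals_eq_0_real:
  fixes v :: "real \<Rightarrow> real"
  assumes int: "integrable lborel v" and rays: "\<And>x. (LINT y|lborel. v y * indicator {x<..} y) = 0"
  shows "AE y in lborel. v y = 0"
proof -
  have [measurable]: "v \<in> borel_measurable borel" using int by auto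
  define P where "P y = max (v y) 0" for y
  define Q where "Q y = max (- v y) 0" for y
  have iP: "integrable lborel P" unfolding P_def by (intro integrable_max int) auto
  have iQ: "integrable lborel Q" unfolding Q_def by (intro integrable_max) (use int in auto)
  have iI: "integrable lborel (\<lambda>y. g y * indicator {x<..} y)" if "integrable lborel g" for g :: "real \<Rightarrow> real" and x
    by (rule Bochner_Integration.integrable_bound[OF that]) (use that in \<open>auto simp: indicator_def\<close>)
  have emeasure_ray: "emeasure (density lborel (\<lambda>y. ennreal (g y))) {x<..}
      = ennreal (LINT y|lborel. g y * indicator {x<..} y)"
    if "integrable lborel g" "\<And>y. g y \<ge> 0" for g :: "real \<Rightarrow> real" and x
  proof -
    have [measurable]: "g \<in> borel_measurable borel" using that(1) by auto
    have "emeasure (density lborel (\<lambda>y. ennreal (g y))) {x<..} = (\<integral>\<^sup>+ y. ennreal (g y * indicator {x<..} y) \<partial>lborel)"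
      by (subst emeasure_density) (auto intro!: nn_integral_cong simp: indicator_def)
    also have "\<dots> = ennreal (LINT y|lborel. g y * indicator {x<..} y)"
      by (rule nn_integral_eq_integral[OF iI[OF that(1)]]) (use that(2) in auto)
    finally show ?thesis .
  qed
  have PQ: "(LINT y|lborel. P y * indicator {x<..} y) = (LINT y|lborel. Q y * indicator {x<..} y)" for x
  proof -
    have "(LINT y|lborel. P y * indicator {x<..} y) - (LINT y|lborel. Q y * indicator {x<..} y)
        = (LINT y|lborel. v y * indicator {x<..} y)"
      using iI[OF iP] iI[OF iQ]
      by (simp flip: Bochner_Integration.integral_diff)
         (intro Bochner_Integration.integral_cong, auto simp: P_def Q_def indicator_def)
    then show ?thesis using rays[of x] by simp
  qed
  have "density lborel (\<lambda>y. ennreal (P y)) = density lborel (\<lambda>y. ennreal (Q y))"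
  proof (rule measure_eqI_lessThan)
    show "emeasure (density lborel (\<lambda>y. ennreal (P y))) {x<..} < \<infinity>" for x
      using emeasure_ray[OF iP, of x] by (simp add: P_def)
    show "emeasure (density lborel (\<lambda>y. ennreal (P y))) {x<..} = emeasure (density lborel (\<lambda>y. ennreal (Q y))) {x<..}" for x
      using emeasure_ray[OF iP, of x] emeasure_ray[OF iQ, of x] PQ[of x] by (simp add: P_def Q_def)
  qed (auto simp: P_def Q_def)
  then have "AE y in lborel. ennreal (P y) = ennreal (Q y)"
    by (intro sigma_finite_measure.density_unique[OF lborel.sigma_finite_measure_axioms]) (auto simp: P_def Q_def)
  then show ?thesis
    by (rule AE_mp) (auto intro!: AE_I2 simp: P_def Q_def max_def split: if_splits)
qed

lemma AE_eq_0_if_ray_integrals_eq_0: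
  fixes v :: "real \<Rightarrow> complex"
  assumes int: "integrable lborel v" and rays: "\<And>x. (LINT y|lborel. v y * indicator {x<..} y) = 0"
  shows "AE y in lborel. v y = 0"
proof -
  have iI: "integrable lborel (\<lambda>y. v y * indicator {x<..} y)" for x
    by (rule Bochner_Integration.integrable_bound[OF int]) (use int in \<open>auto simp: indicator_def\<close>)
  have "AE y in lborel. Re (v y) = 0"
  proof (rule AE_eq_0_if_ray_integrals_eq_0_real)
    fix x
    have "(LINT y|lborel. Re (v y) * indicator {x<..} y) = Re (LINT y|lborel. v y * indicator {x<..} y)"
      by (subst integral_Re[OF iI[of x], symmetric]) (auto intro: Bochner_Integration.integral_cong simp: indicator_def)
    then show "(LINT y|lborel. Re (v y) * indicator {x<..} y) = 0" using rays[of x] by simp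
  qed (use int in auto)
  moreover have "AE y in lborel. Im (v y) = 0"
  proof (rule AE_eq_0_if_ray_integrals_eq_0_real)
    fix x
    have "(LINT y|lborel. Im (v y) * indicator {x<..} y) = Im (LINT y|lborel. v y * indicator {x<..} y)"
      by (subst integral_Im[OF iI[of x], symmetric]) (auto intro: Bochner_Integration.integral_cong simp: indicator_def)
    then show "(LINT y|lborel. Im (v y) * indicator {x<..} y) = 0" using rays[of x] by simp
  qed (use int in auto)
  ultimately show ?thesis by eventually_elim (auto simp: complex_eq_iff)
qed

lemma L2_indicator_Ioo: "(\<lambda>x. indicator {a<..<b} x :: complex) \<in> L2"
proof (rule L2I)
  show "(\<lambda>x. indicator {a<..<b} x :: complex) \<in> borel_measurable lborel" by measurable
  have "emeasure lborel {a<..<b} < \<infinity>"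
    by (cases "a \<le> b") (simp_all add: emeasure_lborel_Ioo)
  then have "integrable lborel (indicat_real {a<..<b})"
    by (intro integrable_real_indicator) auto
  moreover have "(cmod (indicator {a<..<b} x :: complex))\<^sup>2 = indicat_real {a<..<b} x" for x
    by (simp add: indicator_def)
  ultimately show "integrable lborel (\<lambda>x. (cmod (indicator {a<..<b} x :: complex))\<^sup>2)"
    by simp
qed

lemma AE_eq_0_if_orth_D_t:
  assumes w: "w \<in> L2" and orth: "\<And>F k. t_rel F k \<Longrightarrow> inner_L2 w F = 0"
  shows "AE x in lborel. w x = 0"
proof -
  have interval: "AE y in lborel. cnj (w y) * indicator {a<..<b} y = 0" if ab: "0 \<le> a \<or> b \<le> 0" for a b
  proof (rule AE_eq_0_if_ray_integrals_eq_0)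
    show "integrable lborel (\<lambda>y. cnj (w y) * indicator {a<..<b} y)"
      by (intro integrable_inner_L2 w L2_indicator_Ioo)
    fix x
    have "(LINT y|lborel. cnj (w y) * indicator {a<..<b} y * indicator {x<..} y)
        = (LINT y|lborel. cnj (w y) * indicator {max x a<..<b} y)"
      by (intro Bochner_Integration.integral_cong) (auto simp: indicator_def)
    also have "\<dots> = 0"
      using ab by (intro interval_integral_eq_0_if_orth_D_t[OF w orth]) auto
    finally show "(LINT y|lborel. cnj (w y) * indicator {a<..<b} y * indicator {x<..} y) = 0" .
  qed
  have "AE y in lborel. \<forall>N. cnj (w y) * indicator {0<..<real N} y = 0
      \<and> cnj (w y) * indicator {- real N<..<0} y = 0"
    unfolding AE_all_countable by (intro allI AE_conjI interval) auto
  moreover have "AE y in lborel. y \<noteq> 0"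
    by (rule AE_lborel_singleton)
  ultimately show ?thesis
  proof eventually_elim
    case (elim y)
    obtain N where "\<bar>y\<bar> < real N" using reals_Archimedean2 by blast
    then show "w y = 0"
      using elim by (cases "y > 0") (auto simp: indicator_def dest: spec[of _ N])
  qed
qed

section \<open>The adjoint of t\<close>

lemma tstar_rel_unique:
  assumes "tstar_rel y z" "tstar_rel y' z'" "AE x in lborel. y x = y' x"
  shows "AE x in lborel. z x = z' x"
proof -
  have L: "y \<in> L2" "y' \<in> L2" "z \<in> L2" "z' \<in> L2" using assms unfolding tstar_rel_def by auto
  have "AE x in lborel. z x - z' x = 0"
  proof (rule AE_eq_0_if_orth_D_t)
    show "(\<lambda>x. z x - z' x) \<in> L2" using L by (intro L2_diff)
    fix F k assume t: "t_rel F k"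
    have FL: "F \<in> L2" and kL: "k \<in> L2" using t_rel_L2[OF t] by auto
    have "inner_L2 (\<lambda>x. z x - z' x) F = inner_L2 z F - inner_L2 z' F"
      unfolding inner_L2_def using integrable_inner_L2[OF L(3) FL] integrable_inner_L2[OF L(4) FL]
      by (simp add: algebra_simps)
    also have "\<dots> = inner_L2 y k - inner_L2 y' k"
      using assms(1,2) t unfolding tstar_rel_def by auto
    also have "inner_L2 y' k = inner_L2 y k"
      using assms(3) by (intro inner_L2_cong_AE L kL) (auto elim: AE_mp)
    finally show "inner_L2 (\<lambda>x. z x - z' x) F = 0" by simp
  qed
  then show ?thesis by auto
qed

lemma tstar_pow_L2: "tstar_pow n f g \<Longrightarrow> f \<in> L2 \<and> g \<in> L2"
  by (induction n arbitrary: g) (auto simp: tstar_rel_def)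

lemma tstar_pow_unique:
  "tstar_pow n f g \<Longrightarrow> tstar_pow n f' g' \<Longrightarrow> AE x in lborel. f x = f' x \<Longrightarrow> AE x in lborel. g x = g' x"
proof (induction n arbitrary: g g')
  case 0 then show ?case by (auto elim: AE_mp)
next
  case (Suc n)
  then obtain h h' where "tstar_pow n f h" "tstar_rel h g" "tstar_pow n f' h'" "tstar_rel h' g'" by auto
  with Suc.IH Suc.prems(3) show ?case using tstar_rel_unique by blast
qed

lemma tstar_rel_zero: "tstar_rel (\<lambda>x. 0) (\<lambda>x. 0)"
  unfolding tstar_rel_def inner_L2_def by (simp add: L2_zero)

lemma inner_L2_linear_left:
  assumes "g1 \<in> L2" "g2 \<in> L2" "k \<in> L2"
  shows "inner_L2 (\<lambda>x. c * g1 x + g2 x) k = cnj c * inner_L2 g1 k + inner_L2 g2 k"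
proof -
  have "inner_L2 (\<lambda>x. c * g1 x + g2 x) k = (LINT x|lborel. cnj c * (cnj (g1 x) * k x) + cnj (g2 x) * k x)"
    unfolding inner_L2_def by (simp add: algebra_simps)
  also have "\<dots> = cnj c * inner_L2 g1 k + inner_L2 g2 k"
    unfolding inner_L2_def using integrable_inner_L2[OF assms(1,3)] integrable_inner_L2[OF assms(2,3)] by simp
  finally show ?thesis .
qed

lemma tstar_rel_linear:
  assumes 1: "tstar_rel g1 h1" and 2: "tstar_rel g2 h2"
  shows "tstar_rel (\<lambda>x. c * g1 x + g2 x) (\<lambda>x. c * h1 x + h2 x)"
proof -
  have L: "g1 \<in> L2" "h1 \<in> L2" "g2 \<in> L2" "h2 \<in> L2" using 1 2 unfolding tstar_rel_def by auto
  show ?thesis unfolding tstar_rel_def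
  proof (intro conjI allI impI L2_add L2_cmult L)
    fix F k assume t: "t_rel F k"
    then have "F \<in> L2" "k \<in> L2" by (simp_all add: t_rel_L2)
    with 1 2 t L show "inner_L2 (\<lambda>x. c * g1 x + g2 x) k = inner_L2 (\<lambda>x. c * h1 x + h2 x) F"
      by (simp add: inner_L2_linear_left tstar_rel_def)
  qed
qed

lemma tstar_rel_sum:
  assumes "finite S" "\<And>l. l \<in> S \<Longrightarrow> tstar_rel (G l) (H l)"
  shows "tstar_rel (\<lambda>x. \<Sum>l\<in>S. c l * G l x) (\<lambda>x. \<Sum>l\<in>S. c l * H l x)"
  using assms
proof (induction S rule: finite_induct)
  case empty then show ?case by (simp add: tstar_rel_zero)
next
  case (insert a S)
  then show ?case using tstar_rel_linear[of "G a" "H a" _ _ "c a"] by simp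
qed

section \<open>Taylor coefficients of artanh\<close>

lemma binomial_sum_Suc:
  fixes F :: "nat \<Rightarrow> 'a::comm_ring_1"
  shows "(\<Sum>l\<le>Suc k. of_nat (Suc k choose l) * y^(Suc k - l) * F l)
       = (\<Sum>l\<le>k. of_nat (k choose l) * y^(k - l) * (y * F l + F (Suc l)))"
proof -
  have "(\<Sum>l\<le>Suc k. of_nat (Suc k choose l) * y^(Suc k - l) * F l)
      = y^(Suc k) * F 0 + (\<Sum>l\<le>k. of_nat (k choose l) * y^(k - l) * F (Suc l))
          + (\<Sum>l\<le>k. of_nat (k choose Suc l) * y^(k - l) * F (Suc l))"
    by (subst sum.atMost_Suc_shift) (simp add: binomial_Suc_Suc sum.distrib algebra_simps binomial_eq_0)
  moreover have "y^(Suc k) * F 0 + (\<Sum>l\<le>k. of_nat (k choose Suc l) * y^(k - l) * F (Suc l))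
      = (\<Sum>l\<le>Suc k. of_nat (k choose l) * y^(Suc k - l) * F l)"
    by (subst sum.atMost_Suc_shift) simp
  moreover have "\<dots> = (\<Sum>l\<le>k. of_nat (k choose l) * y^(k - l) * (y * F l))"
    by (simp add: binomial_eq_0 Suc_diff_le algebra_simps)
  ultimately show ?thesis
    by (simp add: sum.distrib algebra_simps)
qed

text \<open>\<open>artanh_taylor l b\<close> is the \<open>l\<close>-th Taylor coefficient \<open>artanh^(l)(b) / l!\<close>;
  \<open>artanh_coeff l\<close> lists the coefficients of its power series in \<open>b\<close>.\<close>

primrec artanh_coeff :: "nat \<Rightarrow> nat \<Rightarrow> real" where
  "artanh_coeff 0 = (\<lambda>k. if odd k then 1 / real k else 0)"
| "artanh_coeff (Suc l) = (\<lambda>k. diffs (artanh_coeff l) k / real (Suc l))"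

definition artanh_taylor :: "nat \<Rightarrow> real \<Rightarrow> real" where
  "artanh_taylor l b = (\<Sum>k. artanh_coeff l k * b ^ k)"

lemma artanh_coeff_eq: "artanh_coeff l k = real (k + l choose l) * artanh_coeff 0 (k + l)"
proof (induction l arbitrary: k)
  case 0 then show ?case by simp
next
  case (Suc l)
  have "(Suc k + l choose l) * Suc k = (k + Suc l choose Suc l) * Suc l"
    using Suc_times_binomial_add[of l k] by (simp add: add.commute mult.commute)
  then have e: "real (Suc k) * real (Suc k + l choose l) = real (Suc l) * real (k + Suc l choose Suc l)"
    by (metis mult.commute of_nat_mult)
  have "artanh_coeff (Suc l) k
      = (real (Suc k) * real (Suc k + l choose l)) * artanh_coeff 0 (k + Suc l) / real (Suc l)"
    by (simp add: diffs_def Suc mult_ac)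
  also have "\<dots> = real (k + Suc l choose Suc l) * artanh_coeff 0 (k + Suc l)"
    unfolding e by simp
  finally show ?case .
qed

lemma summable_artanh_coeff: "\<bar>b\<bar> < 1 \<Longrightarrow> summable (\<lambda>k. artanh_coeff l k * b ^ k)"
proof (induction l arbitrary: b)
  case 0
  show ?case
  proof (rule summable_comparison_test)
    show "summable (\<lambda>k. \<bar>b\<bar> ^ k)" using 0 by (intro summable_geometric) simp
    show "\<exists>N. \<forall>n\<ge>N. norm (artanh_coeff 0 n * b ^ n) \<le> \<bar>b\<bar> ^ n"
      by (intro exI[of _ 1] allI impI) (auto simp: abs_mult power_abs mult_left_le_one_le)
  qed
next
  case (Suc l)
  have "summable (\<lambda>k. diffs (artanh_coeff l) k * b ^ k)"
    by (rule termdiff_converges[where K=1]) (use Suc in auto)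
  then show ?case using summable_mult[of _ "1 / real (Suc l)"] by simp
qed

lemma artanh_taylor_has_derivative:
  assumes b: "\<bar>b\<bar> < 1"
  shows "(artanh_taylor l has_real_derivative real (Suc l) * artanh_taylor (Suc l) b) (at b)"
proof -
  define K where "K = (1 + \<bar>b\<bar>) / 2"
  have K: "\<bar>b\<bar> < K" "\<bar>K\<bar> < 1" using b by (auto simp: K_def)
  have summable: "summable (\<lambda>n. diffs (artanh_coeff l) n * b ^ n)"
    by (rule termdiff_converges[where K=1]) (use b summable_artanh_coeff in auto)
  have "((\<lambda>x. \<Sum>n. artanh_coeff l n * x ^ n) has_real_derivative (\<Sum>n. diffs (artanh_coeff l) n * b ^ n)) (at b)"
    by (rule termdiffs_strong[OF summable_artanh_coeff[OF K(2)]]) (use K in auto)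
  moreover have "(\<Sum>n. diffs (artanh_coeff l) n * b ^ n) = real (Suc l) * artanh_taylor (Suc l) b"
    using suminf_mult[OF summable, of "1 / real (Suc l)"] by (simp add: artanh_taylor_def)
  ultimately show ?thesis by (simp add: artanh_taylor_def[abs_def])
qed

lemma artanh_taylor_0:
  assumes b: "\<bar>b\<bar> < 1"
  shows "artanh_taylor 0 b = artanh b"
proof -
  have "(\<lambda>n. - ((-b)^n) / of_nat n) sums ln (1 + b)"
    using ln_series'[OF b] .
  moreover have "(\<lambda>n. - (b^n) / of_nat n) sums ln (1 + (- b))"
    using ln_series'[of "-b"] b by simp
  ultimately have "(\<lambda>n. - ((-b)^n) / of_nat n - - (b^n) / of_nat n) sums (ln (1 + b) - ln (1 + (- b)))"
    by (rule sums_diff)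
  moreover have "- ((-b)^n) / of_nat n - - (b^n) / of_nat n = 2 * (artanh_coeff 0 n * b ^ n)" for n
    by (cases "even n") (auto simp: power_minus_odd)
  ultimately have "(\<lambda>n. 2 * (artanh_coeff 0 n * b ^ n)) sums (ln (1 + b) - ln (1 - b))"
    by simp
  then have "(\<lambda>n. (1/2) * (2 * (artanh_coeff 0 n * b ^ n))) sums ((1/2) * (ln (1 + b) - ln (1 - b)))"
    by (rule sums_mult)
  then have "(\<lambda>n. artanh_coeff 0 n * b ^ n) sums ((ln (1 + b) - ln (1 - b)) / 2)"
    by simp
  then show ?thesis
    using b by (simp add: artanh_taylor_def artanh_def sums_iff ln_divide_pos)
qed

lemma artanh_taylor_sums:
  assumes b: "\<bar>b\<bar> < 1"
  shows "(\<lambda>n. real (2*n+1 choose l) / real (2*n+1) * b^(2*n+1-l)) sums artanh_taylor l b"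
proof -
  define h where "h j = real (j choose l) * artanh_coeff 0 j * b ^ (j - l)" for j
  have "(\<lambda>k. artanh_coeff l k * b ^ k) sums artanh_taylor l b"
    using summable_artanh_coeff[OF b] by (simp add: artanh_taylor_def summable_sums)
  moreover have "artanh_coeff l k * b ^ k = h (k + l)" for k
    by (simp add: h_def artanh_coeff_eq)
  moreover have "(\<Sum>i<l. h i) = 0"
    by (intro sum.neutral) (auto simp: h_def)
  ultimately have "h sums artanh_taylor l b"
    by (simp add: sums_iff_shift)
  moreover have "h n = 0" if "n \<notin> range (\<lambda>n. 2*n+1)" for n
    using that by (auto simp: h_def elim: oddE)
  ultimately have "(\<lambda>n. h (2*n+1)) sums artanh_taylor l b"
    by (subst sums_mono_reindex) (auto intro: strict_monoI)
  then show ?thesis by (simp add: h_def)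
qed

text \<open>Expanding \<open>(x\<^sup>2 - 2\<surd>\<epsilon> \<partial>\<^sub>\<alpha>)\<^sup>k\<close> binomially (the two operators commute).\<close>

lemma Lambda_eq_artanh_taylor:
  assumes \<epsilon>: "\<epsilon> > 0" and b: "\<bar>b\<bar> < 1"
  shows "Lambda \<epsilon> k x b
    = 2 * (\<Sum>l\<le>k. real (k choose l) * (x\<^sup>2)^(k - l) * (fact l * (-2 * sqrt \<epsilon>)^l * artanh_taylor l b))"
  using b
proof (induction k arbitrary: b)
  case 0
  then show ?case by (simp add: artanh_taylor_0 artanh_def)
next
  case (Suc k)
  define \<beta> where "\<beta> = sqrt \<epsilon>"
  have \<beta>: "\<beta> \<noteq> 0" using \<epsilon> by (simp add: \<beta>_def)
  define \<Phi> where "\<Phi> l c = fact l * (-2 * \<beta>)^l * artanh_taylor l c" for l c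
  have d\<Phi>: "((\<lambda>c. \<Phi> l c) has_real_derivative \<Phi> (Suc l) c / (-2 * \<beta>)) (at c)" if "\<bar>c\<bar> < 1" for l c
  proof -
    have "((\<lambda>c. \<Phi> l c) has_real_derivative fact l * (-2 * \<beta>)^l * (real (Suc l) * artanh_taylor (Suc l) c)) (at c)"
      unfolding \<Phi>_def by (intro DERIV_cmult artanh_taylor_has_derivative that)
    moreover have "fact l * (-2 * \<beta>)^l * (real (Suc l) * artanh_taylor (Suc l) c) = \<Phi> (Suc l) c / (-2 * \<beta>)"
      using \<beta> by (simp add: \<Phi>_def field_simps)
    ultimately show ?thesis by simp
  qed
  define S where "S c = 2 * (\<Sum>l\<le>k. real (k choose l) * (x\<^sup>2)^(k - l) * \<Phi> l c)" for c
  have IH: "Lambda \<epsilon> k x c = S c" if "\<bar>c\<bar> < 1" for c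
    using Suc.IH[OF that] by (simp add: S_def \<Phi>_def \<beta>_def)
  define S' where "S' = 2 * (\<Sum>l\<le>k. real (k choose l) * (x\<^sup>2)^(k - l) * (\<Phi> (Suc l) b / (-2 * \<beta>)))"
  have "(S has_real_derivative S') (at b)"
    unfolding S_def S'_def by (intro DERIV_cmult DERIV_sum d\<Phi> Suc.prems)
  then have "((\<lambda>c. Lambda \<epsilon> k x c) has_real_derivative S') (at b)"
    by (rule has_field_derivative_transform_within_open[where S="{-1<..<1}"])
       (use Suc.prems in \<open>auto simp: IH abs_less_iff\<close>)
  then have "Lambda \<epsilon> (Suc k) x b = x\<^sup>2 * S b - 2 * \<beta> * S'"
    using IH[OF Suc.prems] by (simp add: DERIV_imp_deriv \<beta>_def)
  also have "\<dots> = 2 * (\<Sum>l\<le>k. real (k choose l) * (x\<^sup>2)^(k - l) * (x\<^sup>2 * \<Phi> l b + \<Phi> (Suc l) b))"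
    using \<beta> by (simp add: S_def S'_def sum_distrib_left sum.distrib[symmetric] field_simps)
  also have "\<dots> = 2 * (\<Sum>l\<le>Suc k. real (Suc k choose l) * (x\<^sup>2)^(Suc k - l) * \<Phi> l b)"
    using binomial_sum_Suc[of k "x\<^sup>2" "\<lambda>l. \<Phi> l b", symmetric] by simp
  finally show ?case by (simp add: \<Phi>_def \<beta>_def)
qed

section \<open>The adjoint of t on odd Gaussian moments\<close>

lemma sum_atMost_eq_if_zero_beyond:
  fixes A B :: nat
  assumes "\<And>l. A < l \<Longrightarrow> t l = 0" "\<And>l. B < l \<Longrightarrow> t l = 0"
  shows "(\<Sum>l\<le>A. t l) = (\<Sum>l\<le>B. t l)"
proof -
  have "(\<Sum>l\<le>A. t l) = (\<Sum>l\<le>max A B. t l)"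
    by (rule sum.mono_neutral_left) (auto simp: assms(1))
  also have "\<dots> = (\<Sum>l\<le>B. t l)"
    by (rule sum.mono_neutral_right) (auto simp: assms(2))
  finally show ?thesis .
qed

lemma i_power_odd_minus:
  assumes "l \<le> 2*n+1"
  shows "(-1)^n * (\<i> * complex_of_real b) ^ (2*n+1-l) = \<i> * (-\<i>)^l * complex_of_real (b ^ (2*n+1-l))"
proof -
  have "\<i> ^ (2*n+1-l) = \<i> ^ (2*n+1-l) * ((-\<i>) ^ l * \<i> ^ l)"
    by (simp flip: power_mult_distrib)
  also have "\<dots> = \<i> ^ (2*n+1) * (-\<i>) ^ l"
    using assms by (simp add: mult_ac flip: power_add)
  also have "\<i> ^ (2*n+1) = \<i> * (-1)^n"
    by (simp add: power_mult)
  finally have "(-1)^n * \<i> ^ (2*n+1-l) = \<i> * (-\<i>)^l * ((-1)^n * (-1)^n)"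
    by (simp add: mult_ac)
  also have "(-1)^n * (-1)^n = (1::complex)"
    by (simp flip: power_add)
  finally show ?thesis by (simp add: power_mult_distrib mult_ac)
qed

locale gaussian_moments =
  fixes \<epsilon> \<alpha> :: real
  assumes eps_pos: "0 < \<epsilon>" and alpha_pos: "0 < \<alpha>" and alpha_less_1: "\<alpha> < 1"
begin

definition \<beta> :: real where "\<beta> = sqrt \<epsilon>"

definition \<gamma> :: real where "\<gamma> = \<alpha> / (2 * \<beta>)"

definition xi :: "real \<Rightarrow> real" where
  "xi x = exp (- \<alpha> * x\<^sup>2 / (2 * sqrt \<epsilon>))"

definition moment :: "nat \<Rightarrow> real \<Rightarrow> complex" where
  "moment j x = complex_of_real (x ^ (2*j+1) * xi x)"

definition even_moment :: "nat \<Rightarrow> real \<Rightarrow> real" where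
  "even_moment j x = x ^ (2*j) * xi x"

definition even_moment' :: "nat \<Rightarrow> real \<Rightarrow> real" where
  "even_moment' j x = (real (2*j) * x ^ (2*j-1) - 2 * \<gamma> * x ^ (2*j+1)) * xi x"

lemma beta_pos: "\<beta> > 0"
  using eps_pos by (simp add: \<beta>_def)

lemma gamma_pos: "\<gamma> > 0"
  using beta_pos alpha_pos by (simp add: \<gamma>_def)

lemma xi_eq: "xi x = exp (- \<gamma> * x\<^sup>2)"
  by (simp add: xi_def \<gamma>_def \<beta>_def)

lemma L2_power_xi: "(\<lambda>x. complex_of_real (x ^ k * xi x)) \<in> L2"
  unfolding xi_eq using L2_power_gaussian[OF gamma_pos] .

lemma moment_L2: "moment j \<in> L2"
  unfolding moment_def[abs_def] by (rule L2_power_xi)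

lemma smooth_xi: "smooth xi"
  unfolding xi_eq[abs_def]
  by (intro smooth_comp[OF smooth_exp] smooth_cmult smooth_power smooth_ident)

lemma smooth_even_moment: "smooth (even_moment j)"
  unfolding even_moment_def[abs_def] by (intro smooth_mult smooth_power smooth_ident smooth_xi)

lemma even_moment_has_derivative: "(even_moment j has_real_derivative even_moment' j x) (at x)"
proof -
  have "(xi has_real_derivative (- 2 * \<gamma> * x) * xi x) (at x)"
    unfolding xi_eq[abs_def] by (auto intro!: derivative_eq_intros simp: algebra_simps)
  from DERIV_mult[OF DERIV_pow this]
  have "((\<lambda>x. x ^ (2*j) * xi x) has_real_derivative
      real (2*j) * x ^ (2*j - Suc 0) * xi x + (- 2 * \<gamma> * x) * xi x * x ^ (2*j)) (at x)" .
  moreover have "real (2*j) * x ^ (2*j - Suc 0) * xi x + (- 2 * \<gamma> * x) * xi x * x ^ (2*j) = even_moment' j x"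
    by (simp add: even_moment'_def algebra_simps)
  ultimately show ?thesis by (simp add: even_moment_def[abs_def])
qed

lemma even_moment_L2: "(\<lambda>x. complex_of_real (even_moment j x)) \<in> L2"
  unfolding even_moment_def by (rule L2_power_xi)

lemma even_moment'_L2: "(\<lambda>x. complex_of_real (even_moment' j x)) \<in> L2"
proof -
  have "(\<lambda>x. complex_of_real (real (2*j)) * complex_of_real (x ^ (2*j-1) * xi x)
       - complex_of_real (2 * \<gamma>) * complex_of_real (x ^ (2*j+1) * xi x)) \<in> L2"
    by (intro L2_diff L2_cmult L2_power_xi)
  then show ?thesis
    by (simp add: even_moment'_def algebra_simps)
qed

text \<open>Integration by parts against \<open>x\<^sup>2\<^sup>j \<xi>\<close>, which is \<open>moment j\<close> divided by \<open>x\<close>.\<close>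

lemma tstar_moment:
  "tstar_rel (moment j) (\<lambda>x. (\<i> * \<alpha> / \<beta>) * moment j x - 2 * \<i> * real j * moment (j - 1) x)"
proof -
  have lowering: "- \<i> * complex_of_real (even_moment' j x)
      = (\<i> * \<alpha> / \<beta>) * moment j x - 2 * \<i> * real j * moment (j - 1) x" for x
  proof (cases j)
    case 0
    then show ?thesis using beta_pos by (simp add: even_moment'_def moment_def \<gamma>_def field_simps)
  next
    case (Suc i)
    then have "2 * j - 1 = 2 * (j - 1) + 1" by simp
    then show ?thesis using beta_pos by (simp add: even_moment'_def moment_def \<gamma>_def field_simps)
  qed
  have "tstar_rel (moment j) (\<lambda>x. - \<i> * complex_of_real (even_moment' j x))"
    unfolding tstar_rel_def
  proof (intro conjI allI impI moment_L2 L2_cmult even_moment'_L2)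
    fix F k assume "t_rel F k"
    then obtain G where pG: "p_rel F G" and kL: "k \<in> L2" and kG: "AE x in lborel. k x = G x / complex_of_real x"
      unfolding t_rel_def by blast
    have [measurable]: "k \<in> borel_measurable borel" "G \<in> borel_measurable borel"
      using kL pG by (auto simp: p_rel_def intro: L2_measurable)
    have [measurable]: "even_moment j \<in> borel_measurable borel" "xi \<in> borel_measurable borel"
      using smooth_borel_measurable smooth_even_moment smooth_xi by blast+
    have "inner_L2 (moment j) k = (LINT x|lborel. G x * complex_of_real (even_moment j x))"
      unfolding inner_L2_def
    proof (rule integral_cong_AE)
      show "AE x in lborel. cnj (moment j x) * k x = G x * complex_of_real (even_moment j x)"
        using kG AE_lborel_singleton[of 0]
        by eventually_elim (simp add: moment_def even_moment_def power_add power_mult field_simps)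
    qed (simp_all add: moment_def[abs_def])
    also have "\<dots> = \<i> * (LINT x|lborel. F x * complex_of_real (even_moment' j x))"
      by (rule p_rel_integration_by_parts[OF pG smooth_even_moment even_moment_has_derivative
            even_moment_L2 even_moment'_L2])
    also have "\<dots> = inner_L2 (\<lambda>x. - \<i> * complex_of_real (even_moment' j x)) F"
      unfolding inner_L2_def by (simp add: mult_ac)
    finally show "inner_L2 (moment j) k = inner_L2 (\<lambda>x. - \<i> * complex_of_real (even_moment' j x)) F" .
  qed
  from this[unfolded lowering] show ?thesis .
qed

text \<open>\<open>lowered m l\<close> is \<open>N^l (moment m)\<close> for the lowering operator
  \<open>N (moment j) = -2 i \<beta> j moment (j - 1)\<close>, so that \<open>t\<^sup>* = (i \<alpha> + N) / \<beta>\<close> on moments.\<close>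

definition lowering_coeff :: "nat \<Rightarrow> nat \<Rightarrow> complex" where
  "lowering_coeff m l = (-2 * \<i> * \<beta>) ^ l * (of_nat (m choose l) * fact l)"

definition lowered :: "nat \<Rightarrow> nat \<Rightarrow> real \<Rightarrow> complex" where
  "lowered m l x = lowering_coeff m l * moment (m - l) x"

lemma lowered_L2: "lowered m l \<in> L2"
  unfolding lowered_def[abs_def] by (intro L2_cmult moment_L2)

lemma lowered_eq_0: "m < l \<Longrightarrow> lowered m l x = 0"
  by (simp add: lowered_def lowering_coeff_def)

lemma lowering_coeff_Suc: "lowering_coeff m (Suc l) = lowering_coeff m l * (-2 * \<i> * \<beta>) * of_nat (m - l)"
proof -
  have "(m choose Suc l) * Suc l = (m choose l) * (m - l)"
    using binomial_absorption[of l m] binomial_absorb_comp[of m l] by (simp add: mult.commute)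
  then have absorb: "of_nat (m choose Suc l) * of_nat (Suc l) = (of_nat (m choose l) * of_nat (m - l) :: complex)"
    by (simp only: of_nat_mult[symmetric])
  have "lowering_coeff m (Suc l)
      = (-2 * \<i> * \<beta>) * (-2 * \<i> * \<beta>) ^ l * ((of_nat (m choose Suc l) * of_nat (Suc l)) * fact l)"
    by (simp only: lowering_coeff_def power_Suc fact_Suc mult.assoc)
  also have "\<dots> = (-2 * \<i> * \<beta>) * (-2 * \<i> * \<beta>) ^ l * ((of_nat (m choose l) * of_nat (m - l)) * fact l)"
    by (simp only: absorb)
  also have "\<dots> = lowering_coeff m l * (-2 * \<i> * \<beta>) * of_nat (m - l)"
    by (simp only: lowering_coeff_def mult_ac)
  finally show ?thesis .
qed

lemma tstar_lowered:
  "tstar_rel (lowered m l) (\<lambda>x. (1 / \<beta>) * (\<i> * \<alpha> * lowered m l x + lowered m (Suc l) x))"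
proof -
  have "tstar_rel (lowered m l) (\<lambda>x. lowering_coeff m l *
      ((\<i> * \<alpha> / \<beta>) * moment (m - l) x - 2 * \<i> * real (m - l) * moment (m - l - 1) x))"
    unfolding lowered_def[abs_def]
    using tstar_rel_linear[OF tstar_moment[of "m - l"] tstar_rel_zero, where c = "lowering_coeff m l"]
    by simp
  moreover have "(\<lambda>x. lowering_coeff m l *
      ((\<i> * \<alpha> / \<beta>) * moment (m - l) x - 2 * \<i> * real (m - l) * moment (m - l - 1) x))
      = (\<lambda>x. (1 / \<beta>) * (\<i> * \<alpha> * lowered m l x + lowered m (Suc l) x))"
    using beta_pos by (simp add: lowered_def lowering_coeff_Suc field_simps)
  ultimately show ?thesis by simp
qed

definition tstar_iter :: "nat \<Rightarrow> nat \<Rightarrow> real \<Rightarrow> complex" where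
  "tstar_iter m k x = (1 / \<beta>) ^ k * (\<Sum>l\<le>k. of_nat (k choose l) * (\<i> * \<alpha>) ^ (k - l) * lowered m l x)"

lemma tstar_tstar_iter: "tstar_rel (tstar_iter m k) (tstar_iter m (Suc k))"
proof -
  have "tstar_rel (\<lambda>x. \<Sum>l\<le>k. ((1 / \<beta>) ^ k * of_nat (k choose l) * (\<i> * \<alpha>) ^ (k - l)) * lowered m l x)
      (\<lambda>x. \<Sum>l\<le>k. ((1 / \<beta>) ^ k * of_nat (k choose l) * (\<i> * \<alpha>) ^ (k - l))
             * ((1 / \<beta>) * (\<i> * \<alpha> * lowered m l x + lowered m (Suc l) x)))"
    by (rule tstar_rel_sum[OF _ tstar_lowered]) simp
  moreover have "(\<lambda>x. \<Sum>l\<le>k. ((1 / \<beta>) ^ k * of_nat (k choose l) * (\<i> * \<alpha>) ^ (k - l)) * lowered m l x)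
      = tstar_iter m k"
    by (simp add: tstar_iter_def[abs_def] sum_distrib_left mult_ac)
  moreover have "(\<lambda>x. \<Sum>l\<le>k. ((1 / \<beta>) ^ k * of_nat (k choose l) * (\<i> * \<alpha>) ^ (k - l))
             * ((1 / \<beta>) * (\<i> * \<alpha> * lowered m l x + lowered m (Suc l) x)))
      = tstar_iter m (Suc k)"
    unfolding tstar_iter_def[abs_def] binomial_sum_Suc by (simp add: sum_distrib_left mult_ac)
  ultimately show ?thesis by simp
qed

lemma tstar_pow_tstar_iter: "tstar_pow k (moment m) (tstar_iter m k)"
proof (induction k)
  case 0
  have "tstar_iter m 0 = moment m" by (simp add: tstar_iter_def[abs_def] lowered_def lowering_coeff_def)
  then show ?case using moment_L2 by simp
next
  case (Suc k)
  then show ?case using tstar_tstar_iter by auto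
qed

section \<open>Summing the series\<close>

definition arctan_coeff_partial :: "nat \<Rightarrow> nat \<Rightarrow> complex" where
  "arctan_coeff_partial N l = (\<Sum>n\<le>N. complex_of_real ((-1)^n / real (2*n+1)) * of_nat (2*n+1 choose l) * (\<i> * \<alpha>) ^ (2*n+1-l))"

definition arctan_coeff :: "nat \<Rightarrow> complex" where
  "arctan_coeff l = \<i> * (-\<i>)^l * complex_of_real (artanh_taylor l \<alpha>)"

definition S_partial :: "nat \<Rightarrow> nat \<Rightarrow> real \<Rightarrow> complex" where
  "S_partial m N x = (\<Sum>n\<le>N. complex_of_real ((-1)^n / real (2*n+1) * sqrt \<epsilon> ^ (2*n+1)) * tstar_iter m (2*n+1) x)"

definition S_limit :: "nat \<Rightarrow> real \<Rightarrow> complex" where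
  "S_limit m x = (\<Sum>l\<le>m. arctan_coeff l * lowered m l x)"

lemma S_partial_eq: "S_partial m N x = (\<Sum>l\<le>m. arctan_coeff_partial N l * lowered m l x)"
proof -
  have "complex_of_real ((-1)^n / real (2*n+1) * sqrt \<epsilon> ^ (2*n+1)) * tstar_iter m (2*n+1) x
      = (\<Sum>l\<le>m. (complex_of_real ((-1)^n / real (2*n+1)) * of_nat (2*n+1 choose l) * (\<i> * \<alpha>) ^ (2*n+1-l))
          * lowered m l x)" for n
  proof -
    have one: "sqrt \<epsilon> ^ (2*n+1) * (1 / \<beta>) ^ (2*n+1) = 1"
      using beta_pos by (simp add: \<beta>_def flip: power_mult_distrib)
    have "complex_of_real ((-1)^n / real (2*n+1) * sqrt \<epsilon> ^ (2*n+1)) * tstar_iter m (2*n+1) x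
        = complex_of_real ((-1)^n / real (2*n+1) * (sqrt \<epsilon> ^ (2*n+1) * (1 / \<beta>) ^ (2*n+1)))
          * (\<Sum>l\<le>2*n+1. of_nat (2*n+1 choose l) * (\<i> * \<alpha>) ^ (2*n+1-l) * lowered m l x)"
      by (simp only: tstar_iter_def of_real_mult mult.assoc)
    also have "\<dots> = complex_of_real ((-1)^n / real (2*n+1))
          * (\<Sum>l\<le>2*n+1. of_nat (2*n+1 choose l) * (\<i> * \<alpha>) ^ (2*n+1-l) * lowered m l x)"
      unfolding one by simp
    also have "(\<Sum>l\<le>2*n+1. of_nat (2*n+1 choose l) * (\<i> * \<alpha>) ^ (2*n+1-l) * lowered m l x)
        = (\<Sum>l\<le>m. of_nat (2*n+1 choose l) * (\<i> * \<alpha>) ^ (2*n+1-l) * lowered m l x)"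
      by (rule sum_atMost_eq_if_zero_beyond) (auto simp: lowered_eq_0 binomial_eq_0)
    finally show ?thesis by (simp add: sum_distrib_left mult_ac)
  qed
  then have "S_partial m N x = (\<Sum>n\<le>N. \<Sum>l\<le>m. (complex_of_real ((-1)^n / real (2*n+1))
      * of_nat (2*n+1 choose l) * (\<i> * \<alpha>) ^ (2*n+1-l)) * lowered m l x)"
    by (simp add: S_partial_def)
  also have "\<dots> = (\<Sum>l\<le>m. arctan_coeff_partial N l * lowered m l x)"
    by (subst sum.swap) (simp add: arctan_coeff_partial_def sum_distrib_right)
  finally show ?thesis .
qed

lemma arctan_coeff_partial_tendsto: "(\<lambda>N. arctan_coeff_partial N l) \<longlonglongrightarrow> arctan_coeff l"
proof -
  have "(\<lambda>n. complex_of_real (real (2*n+1 choose l) / real (2*n+1) * \<alpha>^(2*n+1-l)))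
      sums complex_of_real (artanh_taylor l \<alpha>)"
    using alpha_pos alpha_less_1 by (intro sums_of_real artanh_taylor_sums) simp
  then have "(\<lambda>n. \<i> * (-\<i>)^l * complex_of_real (real (2*n+1 choose l) / real (2*n+1) * \<alpha>^(2*n+1-l)))
      sums arctan_coeff l"
    unfolding arctan_coeff_def by (rule sums_mult)
  moreover have eq: "\<i> * (-\<i>)^l * complex_of_real (real (2*n+1 choose l) / real (2*n+1) * \<alpha>^(2*n+1-l))
      = complex_of_real ((-1)^n / real (2*n+1)) * of_nat (2*n+1 choose l) * (\<i> * \<alpha>) ^ (2*n+1-l)" for n
  proof (cases "l \<le> 2*n+1")
    case True
    have s1: "complex_of_real ((-1)^n / real (2*n+1)) * of_nat (2*n+1 choose l) * (\<i> * \<alpha>) ^ (2*n+1-l)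
        = ((-1)^n * (\<i> * complex_of_real \<alpha>) ^ (2*n+1-l)) * (of_nat (2*n+1 choose l) / of_nat (2*n+1))"
      by (simp add: field_simps)
    have s2: "complex_of_real (real (2*n+1 choose l) / real (2*n+1) * \<alpha>^(2*n+1-l))
        = complex_of_real (\<alpha> ^ (2*n+1-l)) * (of_nat (2*n+1 choose l) / of_nat (2*n+1))"
      by simp
    show ?thesis
      unfolding s1 s2 i_power_odd_minus[OF True] by (simp only: mult.assoc)
  qed (simp add: binomial_eq_0)
  ultimately have "(\<lambda>n. complex_of_real ((-1)^n / real (2*n+1)) * of_nat (2*n+1 choose l)
      * (\<i> * \<alpha>) ^ (2*n+1-l)) sums arctan_coeff l"
    by (simp only: eq)
  then show ?thesis
    unfolding arctan_coeff_partial_def sums_def_le .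
qed

lemma S_limit_eq: "S_limit m x = (\<i> / 2) * complex_of_real (Lambda \<epsilon> m x \<alpha> * x * xi x)"
proof -
  have "arctan_coeff l * lowered m l x
      = \<i> * complex_of_real (real (m choose l) * (x\<^sup>2)^(m - l)
          * (fact l * (-2 * \<beta>)^l * artanh_taylor l \<alpha>) * x * xi x)" if "l \<le> m" for l
  proof -
    have "(-\<i>) * (-2 * \<i> * complex_of_real \<beta>) = complex_of_real (-2 * \<beta>)"
      by (simp add: complex_eq_iff)
    then have i_beta: "(-\<i>)^l * (-2 * \<i> * complex_of_real \<beta>)^l = complex_of_real ((-2 * \<beta>)^l)"
      by (simp only: power_mult_distrib[symmetric] of_real_power)
    have "arctan_coeff l * lowered m l x = \<i> * ((-\<i>)^l * (-2 * \<i> * complex_of_real \<beta>)^l) *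
        complex_of_real (artanh_taylor l \<alpha> * (real (m choose l) * fact l) * x ^ (2 * (m - l) + 1) * xi x)"
      by (simp add: arctan_coeff_def lowered_def lowering_coeff_def moment_def mult_ac)
    also have "\<dots> = \<i> * complex_of_real ((-2 * \<beta>)^l *
        (artanh_taylor l \<alpha> * (real (m choose l) * fact l) * x ^ (2 * (m - l) + 1) * xi x))"
      unfolding i_beta by (simp only: of_real_mult[symmetric] mult.assoc)
    also have "x ^ (2 * (m - l) + 1) = (x\<^sup>2)^(m - l) * x"
      by (simp add: power_mult)
    finally show ?thesis
      by (simp add: mult_ac)
  qed
  then have "S_limit m x = \<i> * complex_of_real ((\<Sum>l\<le>m. real (m choose l) * (x\<^sup>2)^(m - l)
      * (fact l * (-2 * \<beta>)^l * artanh_taylor l \<alpha>)) * x * xi x)"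
    by (simp add: S_limit_def sum_distrib_left sum_distrib_right)
  also have "(\<Sum>l\<le>m. real (m choose l) * (x\<^sup>2)^(m - l) * (fact l * (-2 * \<beta>)^l * artanh_taylor l \<alpha>))
      = Lambda \<epsilon> m x \<alpha> / 2"
    using Lambda_eq_artanh_taylor[OF eps_pos, of \<alpha> m x] alpha_pos alpha_less_1 by (simp add: \<beta>_def)
  finally show ?thesis by simp
qed

lemma S_limit_L2: "S_limit m \<in> L2"
  unfolding S_limit_def[abs_def] by (intro L2_sum L2_cmult lowered_L2)

lemma S_partial_L2: "S_partial m N \<in> L2"
  unfolding S_partial_def[abs_def]
  using tstar_pow_L2[OF tstar_pow_tstar_iter] by (intro L2_sum L2_cmult) auto

lemma S_partial_tendsto: "(\<lambda>N. norm_L2 (\<lambda>x. S_partial m N x - S_limit m x)) \<longlonglongrightarrow> 0"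
proof -
  have "S_partial m N x - S_limit m x = (\<Sum>l\<le>m. (arctan_coeff_partial N l - arctan_coeff l) * lowered m l x)" for N x
    by (simp add: S_partial_eq S_limit_def sum_subtractf algebra_simps)
  moreover have "(\<lambda>N. norm_L2 (\<lambda>x. \<Sum>l\<le>m. (arctan_coeff_partial N l - arctan_coeff l) * lowered m l x)) \<longlonglongrightarrow> 0"
    using arctan_coeff_partial_tendsto by (intro norm_L2_sum_tendsto_0 lowered_L2) (simp_all add: LIM_zero)
  ultimately show ?thesis by simp
qed

lemma S_rel_moment: "S_rel \<epsilon> (moment m) (\<lambda>x. - complex_of_real (1 / sqrt \<epsilon>) * S_limit m x)"
  unfolding S_rel_def
proof (intro conjI exI[of _ "\<lambda>n. tstar_iter m (2*n+1)"] allI bexI[of _ "S_limit m"] S_limit_L2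
    L2_cmult tstar_pow_tstar_iter AE_I2 refl)
  show "moment m \<in> L2_odd"
    unfolding L2_odd_def using moment_L2 by (auto simp: moment_def xi_def)
  show "(\<lambda>N. norm_L2 (\<lambda>x. (\<Sum>n\<le>N. complex_of_real ((- 1) ^ n / real (2 * n + 1) * sqrt \<epsilon> ^ (2 * n + 1)) *
      tstar_iter m (2 * n + 1) x) - S_limit m x)) \<longlonglongrightarrow> 0"
    using S_partial_tendsto[of m] unfolding S_partial_def .
qed

lemma S_rel_moment_unique:
  assumes S: "S_rel \<epsilon> (moment m) h"
  shows "AE x in lborel. h x = - complex_of_real (1 / sqrt \<epsilon>) * S_limit m x"
proof -
  obtain G s where tp: "\<And>n. tstar_pow (2*n+1) (moment m) (G n)" and s: "s \<in> L2"
    and conv: "(\<lambda>N. norm_L2 (\<lambda>x. (\<Sum>n\<le>N. complex_of_real ((-1)^n / real (2*n+1) * sqrt \<epsilon> ^ (2*n+1)) * G n x) - s x)) \<longlonglongrightarrow> 0"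
    and hs: "AE x in lborel. h x = - complex_of_real (1 / sqrt \<epsilon>) * s x"
    using S unfolding S_rel_def by blast
  have [measurable]: "G n \<in> borel_measurable borel" for n
    using tstar_pow_L2[OF tp[of n]] by (simp add: L2_measurable)
  have [measurable]: "s \<in> borel_measurable borel" "S_partial m N \<in> borel_measurable borel" for N
    using s S_partial_L2 by (auto intro: L2_measurable)
  have G: "AE x in lborel. \<forall>n. G n x = tstar_iter m (2*n+1) x"
    unfolding AE_all_countable by (intro allI tstar_pow_unique[OF tp tstar_pow_tstar_iter]) simp
  have "norm_L2 (\<lambda>x. (\<Sum>n\<le>N. complex_of_real ((-1)^n / real (2*n+1) * sqrt \<epsilon> ^ (2*n+1)) * G n x) - s x)
      = norm_L2 (\<lambda>x. S_partial m N x - s x)" for N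
    unfolding norm_L2_def
  proof (intro arg_cong[where f=sqrt] integral_cong_AE)
    show "(\<lambda>x. (cmod ((\<Sum>n\<le>N. complex_of_real ((-1)^n / real (2*n+1) * sqrt \<epsilon> ^ (2*n+1)) * G n x) - s x))\<^sup>2)
        \<in> borel_measurable lborel" by measurable
    show "(\<lambda>x. (cmod (S_partial m N x - s x))\<^sup>2) \<in> borel_measurable lborel" by measurable
    show "AE x in lborel. (cmod ((\<Sum>n\<le>N. complex_of_real ((-1)^n / real (2*n+1) * sqrt \<epsilon> ^ (2*n+1)) * G n x) - s x))\<^sup>2
        = (cmod (S_partial m N x - s x))\<^sup>2"
      using G by eventually_elim (simp add: S_partial_def)
  qed
  with conv have "(\<lambda>N. norm_L2 (\<lambda>x. S_partial m N x - s x)) \<longlonglongrightarrow> 0"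
    by simp
  then have "AE x in lborel. S_limit m x = s x"
    by (rule norm_L2_limit_unique[OF S_partial_L2 S_limit_L2 s S_partial_tendsto])
  with hs show ?thesis by eventually_elim simp
qed

lemma S_rel_moment_Lambda:
  "S_rel \<epsilon> (moment m) (\<lambda>x. - (\<i> / of_real (2 * sqrt \<epsilon>)) * of_real (Lambda \<epsilon> m x \<alpha> * x * xi x))"
proof -
  have "- (\<i> / of_real (2 * sqrt \<epsilon>)) * of_real (Lambda \<epsilon> m x \<alpha> * x * xi x)
      = - complex_of_real (1 / sqrt \<epsilon>) * S_limit m x" for x
    using eps_pos by (simp add: S_limit_eq field_simps)
  with S_rel_moment[of m] show ?thesis by simp
qed

lemma inner_moment_S_rel:
  assumes "S_rel \<epsilon> (moment m) h"
  shows "inner_L2 (moment n) h = - (\<i> / of_real (2 * sqrt \<epsilon>))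
    * of_real (LINT x|lborel. xi x * x ^ (2*n+2) * Lambda \<epsilon> m x \<alpha> * xi x)"
proof -
  have "h \<in> L2" using assms unfolding S_rel_def by blast
  have "inner_L2 (moment n) h = inner_L2 (moment n) (\<lambda>x. - complex_of_real (1 / sqrt \<epsilon>) * S_limit m x)"
    using S_rel_moment_unique[OF assms]
    by (intro inner_L2_cong_AE moment_L2 \<open>h \<in> L2\<close> L2_cmult S_limit_L2) simp_all
  also have "\<dots> = (LINT x|lborel. - (\<i> / of_real (2 * sqrt \<epsilon>))
      * of_real (xi x * x ^ (2*n+2) * Lambda \<epsilon> m x \<alpha> * xi x))"
    unfolding inner_L2_def using eps_pos
    by (intro Bochner_Integration.integral_cong refl) (simp add: moment_def S_limit_eq field_simps power_add)
  also have "\<dots> = - (\<i> / of_real (2 * sqrt \<epsilon>)) * of_real (LINT x|lborel. xi x * x ^ (2*n+2) * Lambda \<epsilon> m x \<alpha> * xi x)"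
    by (simp only: integral_mult_right_zero integral_complex_of_real)
  finally show ?thesis .
qed

end

theorem lemma3p7:
  fixes \<epsilon> \<alpha> :: real and \<xi> :: "real \<Rightarrow> real" and f :: "nat \<Rightarrow> real \<Rightarrow> complex" and m :: nat
  assumes "0 < \<epsilon>" and "\<epsilon> \<le> 1"
    and "0 < \<alpha>" and "\<alpha> < 1"
    and "\<xi> = (\<lambda>x. exp (- \<alpha> * x\<^sup>2 / (2 * sqrt \<epsilon>)))"
    and "f = (\<lambda>k x. of_real (x ^ (2*k+1) * \<xi> x))"
  shows "(\<exists>h. S_rel \<epsilon> (f m) h)
    \<and> S_rel \<epsilon> (f m) (\<lambda>x. - (\<i> / of_real (2 * sqrt \<epsilon>)) * of_real (Lambda \<epsilon> m x \<alpha> * x * \<xi> x))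
    \<and> (\<forall>n h. S_rel \<epsilon> (f m) h \<longrightarrow>
         inner_L2 (f n) h
           = - (\<i> / of_real (2 * sqrt \<epsilon>))
             * of_real (LINT x|lborel. \<xi> x * x ^ (2*n+2) * Lambda \<epsilon> m x \<alpha> * \<xi> x))"
proof -
  interpret gaussian_moments \<epsilon> \<alpha>
    using assms(1,3,4) by unfold_locales
  have "\<xi> = xi" "f = moment"
    using assms(5,6) by (simp_all add: xi_def[abs_def] moment_def[abs_def])
  then show ?thesis
    using S_rel_moment_Lambda inner_moment_S_rel by blast
qed

end
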